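(* For every $n\ge1$, $R_n^*$ equals the supremum of $\sum_{i=1}^n\hat d_i$ over all $(\hat d_1,\dots,\hat d_n)\in\mathbb R_+^n$ and nondecreasing integrable functions $h:[0,1]\to\mathbb R_+$ satisfying $$\hat d_1\le\int_0^1h(u)\,du,\qquad \hat d_i\le\int_0^qh(u)\,du+(1-q)\hat d_{i-1}\ \ \text{for all } i=2,\dots,n,\ q\in[0,1],$$ $$\int_0^1h(u)\,P_n'(1-u)\,du=1.$$
   Context: Let $\mathcal F$ be the family of CDFs of nonnegative random variables with finite mean. In the deferred-contracts model (OSDC) with instance $(F,n)$, $X_1,\dots,X_n$ are i.i.d. with CDF $F$, revealed one at a time; at time $i$, knowing $X_1,\dots,X_i$ and the last time $\ell\ge i-1$ already covered (initially $\ell=0$), an online algorithm chooses an integer $T_i\ge0$ covering times $\ell+1,\dots,\ell+T_i$ at cost $T_iX_i$, with $T_i\ge1$ forced when $\ell=i-1$. $\mathtt{ALG}_n(F)=\mathbb E[\sum_iT_iX_i]$, $\mathtt{OPT}_n(F)=\mathbb E[\sum_{i=1}^n\min\{X_1,\dots,X_i\}]$, $R_n^D(\mathrm{ALG})=\sup_F\mathtt{ALG}_n(F)/\mathtt{OPT}_n(F)$ and $R_n^*=\inf_{\mathrm{ALG}}R_n^D(\mathrm{ALG})$. $P_n'(t)=\sum_{i=1}^n i\,t^{i-1}$. *)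

theory Defs
  imports "HOL-Probability.Probability"
begin

text \<open>An online algorithm for horizon n knows the
distribution F (given as a probability measure on the reals, whose CDF is the paper's F)
and the horizon n.  At time i (1 \<le> i \<le> n) it sees the list [X_1,...,X_i] and the last
covered time l and returns T_i.\<close>

type_synonym osdc_alg = "real measure \<Rightarrow> nat \<Rightarrow> nat \<Rightarrow> real list \<Rightarrow> nat \<Rightarrow> nat"

fun osdc_cov :: "osdc_alg \<Rightarrow> real measure \<Rightarrow> nat \<Rightarrow> (nat \<Rightarrow> real) \<Rightarrow> nat \<Rightarrow> nat" where
  "osdc_cov A F n x 0 = 0"
| "osdc_cov A F n x (Suc i) =
     osdc_cov A F n x i + A F n (Suc i) (map x [1..<Suc (Suc i)]) (osdc_cov A F n x i)"

definition osdc_T :: "osdc_alg \<Rightarrow> real measure \<Rightarrow> nat \<Rightarrow> (nat \<Rightarrow> real) \<Rightarrow> nat \<Rightarrow> nat" where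
  "osdc_T A F n x i = A F n i (map x [1..<Suc i]) (osdc_cov A F n x (i - 1))"

definition osdc_cost :: "osdc_alg \<Rightarrow> real measure \<Rightarrow> nat \<Rightarrow> (nat \<Rightarrow> real) \<Rightarrow> real" where
  "osdc_cost A F n x = (\<Sum>i=1..n. real (osdc_T A F n x i) * x i)"

definition iid :: "real measure \<Rightarrow> nat \<Rightarrow> (nat \<Rightarrow> real) measure" where
  "iid F n = PiM {1..n} (\<lambda>_. F)"

definition dist_family :: "real measure set" where
  "dist_family = {F. real_distribution F \<and> (AE x in F. 0 \<le> x) \<and> integrable F (\<lambda>x. x)}"

definition ALG :: "osdc_alg \<Rightarrow> nat \<Rightarrow> real measure \<Rightarrow> ennreal" where
  "ALG A n F = (\<integral>\<^sup>+ x. ennreal (osdc_cost A F n x) \<partial>iid F n)"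

definition OPT :: "nat \<Rightarrow> real measure \<Rightarrow> ennreal" where
  "OPT n F = (\<integral>\<^sup>+ x. ennreal (\<Sum>i=1..n. Min (x ` {1..i})) \<partial>iid F n)"

definition admissible :: "nat \<Rightarrow> osdc_alg \<Rightarrow> bool" where
  "admissible n A \<longleftrightarrow>
     (\<forall>F i xs l. 1 \<le> i \<longrightarrow> l = i - 1 \<longrightarrow> 1 \<le> A F n i xs l) \<and>
     (\<forall>F \<in> dist_family. osdc_cost A F n \<in> borel_measurable (iid F n))"

definition ratio_D :: "nat \<Rightarrow> osdc_alg \<Rightarrow> ennreal" where
  "ratio_D n A = (SUP F \<in> dist_family. ALG A n F / OPT n F)"

definition R_star :: "nat \<Rightarrow> ennreal" where
  "R_star n = (INF A \<in> {A. admissible n A}. ratio_D n A)"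

definition Pn' :: "nat \<Rightarrow> real \<Rightarrow> real" where
  "Pn' n t = (\<Sum>i=1..n. real i * t ^ (i - 1))"

definition feasible :: "nat \<Rightarrow> ((nat \<Rightarrow> real) \<times> (real \<Rightarrow> real)) set" where
  "feasible n = {(d, h).
      (\<forall>i\<in>{1..n}. 0 \<le> d i) \<and>
      (\<forall>u\<in>{0..1}. 0 \<le> h u) \<and> mono_on {0..1} h \<and> h integrable_on {0..1} \<and>
      d 1 \<le> integral {0..1} h \<and>
      (\<forall>i\<in>{2..n}. \<forall>q\<in>{0..1}. d i \<le> integral {0..q} h + (1 - q) * d (i - 1)) \<and>
      integral {0..1} (\<lambda>u. h u * Pn' n (1 - u)) = 1}"

end

theory Submission
  imports Defs
begin

text \<open>For a fixed distribution the problem is a finite-horizon Markov decision problem whose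
  state is the number of remaining steps together with the number of uncovered periods. With
  \<open>D\<^sub>1 = E X\<close> and \<open>D\<^sub>j\<^sub>+\<^sub>1 = E min X D\<^sub>j\<close>, its value is a sum of \<open>D\<close>'s:
  the \<open>s\<close>-th uncovered period is bought at the current price \<open>x\<close> exactly when \<open>x\<close> is at most
  the value of waiting. So the optimal algorithm pays \<open>D\<^sub>1 + \<dots> + D\<^sub>n\<close>, every algorithm
  pays at least that, and \<open>R\<^sub>n\<^sup>* = sup\<^sub>F (D\<^sub>1 + \<dots> + D\<^sub>n) / OPT\<^sub>n(F)\<close>.

  Writing \<open>X = Q(U)\<close> with the quantile function \<open>Q\<close> and \<open>U\<close> uniform, the minimum of \<open>i\<close>
  uniforms has density \<open>i (1 - u)\<^sup>i\<^sup>-\<^sup>1\<close>, so \<open>OPT\<^sub>n(F) = \<integral> Q(u) P\<^sub>n'(1 - u) du\<close>,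
  and \<open>E min X c = \<integral> min (Q u) c du = min\<^sub>q (\<integral>\<^sub>0\<^sup>q Q + (1 - q) c)\<close>. Hence
  \<open>(D / OPT, Q / OPT)\<close> is a feasible pair, and conversely a feasible pair \<open>(d, h)\<close> gives
  the law of \<open>h(U)\<close> with \<open>OPT = 1\<close> and \<open>D\<^sub>i \<ge> d\<^sub>i\<close>. Two approximations make this
  rigorous: \<open>Q\<close> is truncated at a level \<open>M \<rightarrow> \<infinity>\<close> (so that the pair is bounded), and \<open>h\<close> is
  replaced by a step function (so that the law is finitely supported, which makes the decisions
  of an arbitrary algorithm measurable).\<close>


section \<open>Coverage under an online algorithm\<close>

definition seq_space :: "(nat \<Rightarrow> real) measure" where
  "seq_space = PiM UNIV (\<lambda>_. borel)"

text \<open>Admissibility only makes the total cost measurable; the dynamic-programming argument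
  needs every single decision to be measurable.\<close>

definition decisions_measurable :: "osdc_alg \<Rightarrow> real measure \<Rightarrow> nat \<Rightarrow> bool" where
  "decisions_measurable A F n \<longleftrightarrow>
     (\<forall>i l. (\<lambda>\<omega>. A F n i (map \<omega> [1..<Suc i]) l) \<in> seq_space \<rightarrow>\<^sub>M count_space UNIV)"

definition covers_when_forced :: "osdc_alg \<Rightarrow> real measure \<Rightarrow> nat \<Rightarrow> bool" where
  "covers_when_forced A F n \<longleftrightarrow> (\<forall>i xs l. 1 \<le> i \<longrightarrow> l = i - 1 \<longrightarrow> 1 \<le> A F n i xs l)"

lemma osdc_cov_ge:
  assumes "covers_when_forced A F n"
  shows "i \<le> osdc_cov A F n \<omega> i"
proof (induction i)
  case 0
  then show ?case by simp
next
  case (Suc i)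
  show ?case
  proof (cases "osdc_cov A F n \<omega> i = i")
    case True
    have "\<forall>xs. 1 \<le> A F n (Suc i) xs i"
      using assms unfolding covers_when_forced_def by force
    then show ?thesis using True by (simp del: upt_Suc)
  next
    case False
    then show ?thesis using Suc by simp
  qed
qed

lemma osdc_cov_Suc:
  "osdc_cov A F n \<omega> (Suc i) = osdc_cov A F n \<omega> i + osdc_T A F n \<omega> (Suc i)"
  by (simp add: osdc_T_def)

lemma osdc_cov_cong:
  "(\<And>j. 1 \<le> j \<Longrightarrow> j \<le> i \<Longrightarrow> \<omega> j = \<omega>' j) \<Longrightarrow> osdc_cov A F n \<omega> i = osdc_cov A F n \<omega>' i"
proof (induction i)
  case 0
  then show ?case by simp
next
  case (Suc i)
  have "osdc_cov A F n \<omega> i = osdc_cov A F n \<omega>' i"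
    using Suc by auto
  moreover have "map \<omega> [1..<Suc (Suc i)] = map \<omega>' [1..<Suc (Suc i)]"
    using Suc.prems by (intro map_cong) auto
  ultimately show ?case by (simp only: osdc_cov.simps)
qed

lemma osdc_T_cong:
  assumes "\<And>j. 1 \<le> j \<Longrightarrow> j \<le> i \<Longrightarrow> \<omega> j = \<omega>' j"
  shows "osdc_T A F n \<omega> i = osdc_T A F n \<omega>' i"
proof -
  have "osdc_cov A F n \<omega> (i - 1) = osdc_cov A F n \<omega>' (i - 1)"
    by (rule osdc_cov_cong) (use assms in auto)
  moreover have "map \<omega> [1..<Suc i] = map \<omega>' [1..<Suc i]"
    using assms by (intro map_cong) auto
  ultimately show ?thesis by (simp only: osdc_T_def)
qed

lemma osdc_cov_fun_upd:
  assumes "1 \<le> m"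
  shows "osdc_cov A F n (w(m := x)) m = osdc_cov A F n w (m - 1) + osdc_T A F n (w(m := x)) m"
proof -
  have "osdc_cov A F n (w(m := x)) (m - 1) = osdc_cov A F n w (m - 1)"
    by (rule osdc_cov_cong) auto
  then show ?thesis
    using osdc_cov_Suc[of A F n "w(m := x)" "m - 1"] assms by simp
qed

lemma osdc_T_fun_upd_ge_1:
  assumes "covers_when_forced A F n" "1 \<le> m" "osdc_cov A F n w (m - 1) = m - 1"
  shows "1 \<le> osdc_T A F n (w(m := x)) m"
proof -
  have "osdc_cov A F n (w(m := x)) (m - 1) = osdc_cov A F n w (m - 1)"
    by (rule osdc_cov_cong) auto
  then show ?thesis
    using assms unfolding osdc_T_def covers_when_forced_def by simp
qed

lemma measurable_osdc_cov:
  assumes "decisions_measurable A F n"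
  shows "(\<lambda>\<omega>. osdc_cov A F n \<omega> i) \<in> seq_space \<rightarrow>\<^sub>M count_space UNIV"
proof (induction i)
  case 0
  then show ?case by simp
next
  case (Suc i)
  have "(\<lambda>\<omega>. (\<lambda>c \<omega>. c + A F n (Suc i) (map \<omega> [1..<Suc (Suc i)]) c) (osdc_cov A F n \<omega> i) \<omega>)
      \<in> seq_space \<rightarrow>\<^sub>M count_space UNIV"
  proof (rule measurable_compose_countable[OF _ Suc])
    fix c :: nat
    have "(\<lambda>\<omega>. A F n (Suc i) (map \<omega> [1..<Suc (Suc i)]) c) \<in> seq_space \<rightarrow>\<^sub>M count_space UNIV"
      using assms unfolding decisions_measurable_def by blast
    then show "(\<lambda>\<omega>. c + A F n (Suc i) (map \<omega> [1..<Suc (Suc i)]) c) \<in> seq_space \<rightarrow>\<^sub>M count_space UNIV"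
      using measurable_compose[of _ seq_space "count_space UNIV" "\<lambda>t. c + t"] by simp
  qed
  then show ?case by simp
qed

lemma measurable_osdc_T:
  assumes "decisions_measurable A F n"
  shows "(\<lambda>\<omega>. osdc_T A F n \<omega> i) \<in> seq_space \<rightarrow>\<^sub>M count_space UNIV"
proof -
  have "(\<lambda>\<omega>. (\<lambda>c \<omega>. A F n i (map \<omega> [1..<Suc i]) c) (osdc_cov A F n \<omega> (i - 1)) \<omega>)
      \<in> seq_space \<rightarrow>\<^sub>M count_space UNIV"
    by (rule measurable_compose_countable[OF _ measurable_osdc_cov[OF assms]])
       (use assms in \<open>auto simp: decisions_measurable_def\<close>)
  then show ?thesis by (simp add: osdc_T_def)
qed

lemma measurable_seq_space_component [measurable]: "(\<lambda>\<omega>. \<omega> j) \<in> seq_space \<rightarrow>\<^sub>M borel"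
  unfolding seq_space_def by simp

lemma borel_measurable_real_osdc_T:
  assumes "decisions_measurable A F n"
  shows "(\<lambda>\<omega>. real (osdc_T A F n \<omega> j)) \<in> borel_measurable seq_space"
  by (rule measurable_compose[OF measurable_osdc_T[OF assms]]) (simp add: measurable_count_space_eq1)


section \<open>The dynamic-programming values\<close>

definition trunc_mean :: "real measure \<Rightarrow> real \<Rightarrow> real" where
  "trunc_mean F c = (\<integral>x. min x c \<partial>F)"

fun dp_val :: "real measure \<Rightarrow> nat \<Rightarrow> real" where
  "dp_val F 0 = 0"
| "dp_val F (Suc 0) = (\<integral>x. x \<partial>F)"
| "dp_val F (Suc (Suc j)) = trunc_mean F (dp_val F (Suc j))"

text \<open>\<open>dp_value F r k\<close> is the optimal expected cost when \<open>r\<close> steps are left (the current one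
  included) and \<open>k \<le> r\<close> of the remaining periods are still uncovered: the \<open>s\<close>-th of them
  costs \<open>dp_val F (r - k + s)\<close>. At current price \<open>x\<close> it is optimal to buy the \<open>s\<close>-th period now
  iff \<open>x\<close> does not exceed the value \<open>dp_val F (r - k + s - 1)\<close> of waiting; index \<open>0\<close> means
  there is no step left to wait for.\<close>

definition dp_value :: "real measure \<Rightarrow> nat \<Rightarrow> nat \<Rightarrow> ennreal" where
  "dp_value F r k = (\<Sum>s=1..k. ennreal (dp_val F (r - k + s)))"

definition capped_price :: "real measure \<Rightarrow> nat \<Rightarrow> real \<Rightarrow> ennreal" where
  "capped_price F j x = (if j = 0 then ennreal x else ennreal (min x (dp_val F j)))"

definition dp_step_cost :: "real measure \<Rightarrow> nat \<Rightarrow> nat \<Rightarrow> real \<Rightarrow> ennreal" where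
  "dp_step_cost F r k x = (\<Sum>s=1..k. capped_price F (r - k + s - 1) x)"

lemma dist_familyD:
  assumes "F \<in> dist_family"
  shows "real_distribution F" "AE x in F. 0 \<le> x" "integrable F (\<lambda>x. x)"
  using assms unfolding dist_family_def by auto

lemma integrable_min_const:
  assumes "F \<in> dist_family"
  shows "integrable F (\<lambda>x. min x c)"
proof -
  interpret real_distribution F
    using dist_familyD[OF assms] by simp
  have "integrable F (\<lambda>x. \<bar>x\<bar> + \<bar>c\<bar>)"
    using dist_familyD(3)[OF assms] by auto
  then show ?thesis
    by (rule Bochner_Integration.integrable_bound) auto
qed

lemma mean_nonneg:
  assumes "F \<in> dist_family"
  shows "0 \<le> (\<integral>x. x \<partial>F)"
  using dist_familyD(2)[OF assms] by (intro integral_nonneg_AE) auto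

lemma trunc_mean_nonneg:
  assumes "F \<in> dist_family" "0 \<le> c"
  shows "0 \<le> trunc_mean F c"
  unfolding trunc_mean_def using dist_familyD(2)[OF assms(1)] assms(2)
  by (intro integral_nonneg_AE) (auto elim!: eventually_mono)

lemma trunc_mean_mono:
  assumes "F \<in> dist_family" "c \<le> c'"
  shows "trunc_mean F c \<le> trunc_mean F c'"
  unfolding trunc_mean_def using assms
  by (intro integral_mono integrable_min_const) auto

lemma trunc_mean_le_mean:
  assumes "F \<in> dist_family"
  shows "trunc_mean F c \<le> (\<integral>x. x \<partial>F)"
  unfolding trunc_mean_def using assms dist_familyD(3)[OF assms]
  by (intro integral_mono integrable_min_const) auto

lemma dp_val_nonneg:
  assumes "F \<in> dist_family"
  shows "0 \<le> dp_val F j"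
  using assms by (induction F j rule: dp_val.induct) (auto intro: mean_nonneg trunc_mean_nonneg)

lemma dp_val_Suc_le:
  assumes "F \<in> dist_family"
  shows "dp_val F (Suc (Suc j)) \<le> dp_val F (Suc j)"
proof (induction j)
  case 0
  then show ?case using trunc_mean_le_mean[OF assms] by simp
next
  case (Suc j)
  then show ?case using trunc_mean_mono[OF assms] by simp
qed

lemma dp_val_antimono:
  assumes "F \<in> dist_family" "1 \<le> j" "j \<le> j'"
  shows "dp_val F j' \<le> dp_val F j"
  using assms(3,2)
proof (induction j' rule: dec_induct)
  case base
  then show ?case by simp
next
  case (step m)
  then obtain m' where "m = Suc m'" by (cases m) auto
  then show ?case using step dp_val_Suc_le[OF assms(1), of m'] by simp
qed

lemma dp_val_le_mean:
  assumes "F \<in> dist_family" "1 \<le> j"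
  shows "dp_val F j \<le> (\<integral>x. x \<partial>F)"
  using dp_val_antimono[OF assms(1) order.refl assms(2)] by simp

lemma dp_value_eq_sum:
  assumes "F \<in> dist_family"
  shows "dp_value F n n = ennreal (\<Sum>s=1..n. dp_val F s)"
  unfolding dp_value_def using dp_val_nonneg[OF assms] by (subst sum_ennreal) auto

lemma borel_measurable_capped_price [measurable]: "capped_price F j \<in> borel_measurable borel"
  unfolding capped_price_def by measurable

lemma nn_integral_capped_price:
  assumes "F \<in> dist_family"
  shows "(\<integral>\<^sup>+x. capped_price F j x \<partial>F) = ennreal (dp_val F (Suc j))"
proof (cases j)
  case 0
  then show ?thesis
    using dist_familyD[OF assms] by (simp add: capped_price_def nn_integral_eq_integral)
next
  case (Suc j')
  have "AE x in F. 0 \<le> min x (dp_val F j)"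
    using dist_familyD(2)[OF assms] dp_val_nonneg[OF assms, of j] by (auto elim!: eventually_mono)
  then have "(\<integral>\<^sup>+x. ennreal (min x (dp_val F j)) \<partial>F) = ennreal (\<integral>x. min x (dp_val F j) \<partial>F)"
    by (intro nn_integral_eq_integral integrable_min_const[OF assms])
  then show ?thesis using Suc by (simp add: capped_price_def trunc_mean_def)
qed

lemma nn_integral_dp_step_cost:
  assumes "F \<in> dist_family" "k \<le> r"
  shows "(\<integral>\<^sup>+x. dp_step_cost F r k x \<partial>F) = dp_value F r k"
proof -
  interpret real_distribution F
    using dist_familyD[OF assms(1)] by simp
  have "(\<integral>\<^sup>+x. dp_step_cost F r k x \<partial>F) = (\<Sum>s=1..k. \<integral>\<^sup>+x. capped_price F (r - k + s - 1) x \<partial>F)"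
    unfolding dp_step_cost_def by (intro nn_integral_sum) simp
  also have "\<dots> = (\<Sum>s=1..k. ennreal (dp_val F (r - k + s)))"
    by (intro sum.cong refl) (auto simp: nn_integral_capped_price[OF assms(1)] Suc_diff_Suc)
  finally show ?thesis by (simp add: dp_value_def)
qed

lemma ennreal_real_of_nat_mult: "ennreal (real T * x) = of_nat T * ennreal x"
proof (cases "0 \<le> x")
  case True
  then show ?thesis by (simp add: ennreal_mult ennreal_of_nat_eq_real_of_nat)
next
  case False
  then have "real T * x \<le> 0" by (simp add: mult_nonneg_nonpos)
  then show ?thesis using False by (simp add: ennreal_neg)
qed

lemma dp_step_cost_split:
  assumes "T \<le> k" "k \<le> r" "k < r \<or> 1 \<le> T"
  shows "dp_step_cost F r k x =
    (\<Sum>s=1..T. capped_price F (r - k + s - 1) x) + (\<Sum>s=1..k-T. capped_price F ((r - 1) - (k - T) + s) x)"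
proof -
  have "{1..k} = {1..T} \<union> {T+1..k}"
    using assms by auto
  then have "dp_step_cost F r k x =
      (\<Sum>s=1..T. capped_price F (r - k + s - 1) x) + (\<Sum>s=T+1..k. capped_price F (r - k + s - 1) x)"
    unfolding dp_step_cost_def by (subst sum.union_disjoint[symmetric]) auto
  also have "(\<Sum>s=T+1..k. capped_price F (r - k + s - 1) x)
      = (\<Sum>s=1..k-T. capped_price F (r - k + (s + T) - 1) x)"
    using sum.shift_bounds_cl_nat_ivl[of "\<lambda>s. capped_price F (r - k + s - 1) x" 1 T "k - T"] assms(1)
    by (simp add: add.commute)
  also have "\<dots> = (\<Sum>s=1..k-T. capped_price F ((r - 1) - (k - T) + s) x)"
    using assms by (intro sum.cong refl) (auto intro!: arg_cong[where f="\<lambda>j. capped_price F j x"])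
  finally show ?thesis .
qed

text \<open>Buying \<open>T\<close> periods at price \<open>x\<close> and then acting optimally is never cheaper than
  the greedy rule, as long as \<open>T \<ge> 1\<close> when nothing may be postponed.\<close>

lemma dp_step_cost_le:
  assumes "k \<le> r" "k = r \<Longrightarrow> 1 \<le> T"
  shows "dp_step_cost F r k x \<le> ennreal (real T * x) + dp_value F (r - 1) (k - T)"
proof (cases "T \<le> k")
  case True
  have "(\<Sum>s=1..T. capped_price F (r - k + s - 1) x) \<le> (\<Sum>s=1..T. ennreal x)"
    by (intro sum_mono) (auto simp: capped_price_def intro!: ennreal_leI)
  also have "\<dots> = ennreal (real T * x)"
    by (simp add: ennreal_real_of_nat_mult)
  finally have now: "(\<Sum>s=1..T. capped_price F (r - k + s - 1) x) \<le> ennreal (real T * x)" .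
  have later: "(\<Sum>s=1..k-T. capped_price F ((r - 1) - (k - T) + s) x) \<le> dp_value F (r - 1) (k - T)"
    unfolding dp_value_def by (intro sum_mono) (auto simp: capped_price_def intro!: ennreal_leI)
  have "k < r \<or> 1 \<le> T"
    using assms by linarith
  with now later show ?thesis
    by (simp only: dp_step_cost_split[OF True assms(1)] add_mono)
next
  case False
  have "dp_step_cost F r k x \<le> (\<Sum>s=1..k. ennreal x)"
    unfolding dp_step_cost_def by (intro sum_mono) (auto simp: capped_price_def intro!: ennreal_leI)
  also have "\<dots> = of_nat k * ennreal x" by simp
  also have "\<dots> \<le> of_nat T * ennreal x"
    using False by (intro mult_right_mono) auto
  also have "\<dots> = ennreal (real T * x)"
    by (simp add: ennreal_real_of_nat_mult)
  finally show ?thesis by (rule order.trans) simp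
qed


section \<open>The Bellman recursion\<close>

definition splice :: "nat \<Rightarrow> (nat \<Rightarrow> real) \<Rightarrow> (nat \<Rightarrow> real) \<Rightarrow> nat \<Rightarrow> real" where
  "splice i w y = (\<lambda>j. if j < i then w j else y j)"

definition cost_from :: "osdc_alg \<Rightarrow> real measure \<Rightarrow> nat \<Rightarrow> nat \<Rightarrow> (nat \<Rightarrow> real) \<Rightarrow> ennreal" where
  "cost_from A F n i w = (\<Sum>j=i..n. ennreal (real (osdc_T A F n w j) * w j))"

definition exp_cost_from :: "osdc_alg \<Rightarrow> real measure \<Rightarrow> nat \<Rightarrow> nat \<Rightarrow> (nat \<Rightarrow> real) \<Rightarrow> ennreal" where
  "exp_cost_from A F n i w = (\<integral>\<^sup>+y. cost_from A F n i (splice i w y) \<partial>PiM {i..n} (\<lambda>_. F))"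

lemma measurable_splice:
  assumes "sets F = sets borel"
  shows "splice i w \<in> PiM J (\<lambda>_. F) \<rightarrow>\<^sub>M seq_space"
proof -
  have "(\<lambda>y j. splice i w y j) \<in> PiM J (\<lambda>_. F) \<rightarrow>\<^sub>M PiM UNIV (\<lambda>_. borel)"
  proof (rule measurable_PiM_single')
    fix j :: nat
    show "(\<lambda>y. splice i w y j) \<in> PiM J (\<lambda>_. F) \<rightarrow>\<^sub>M borel"
    proof (cases "j < i \<or> j \<notin> J")
      case True
      then have "\<forall>y\<in>space (PiM J (\<lambda>_. F)). splice i w y j = (if j < i then w j else undefined)"
        by (auto simp: splice_def space_PiM PiE_def extensional_def)
      then show ?thesis
        using measurable_cong[of "PiM J (\<lambda>_. F)" "\<lambda>y. splice i w y j"] by simp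
    next
      case False
      have "(\<lambda>y. y j) \<in> PiM J (\<lambda>_. F) \<rightarrow>\<^sub>M borel"
        using False measurable_cong_sets[OF refl assms] measurable_component_singleton[of j J]
        by blast
      then show ?thesis
        using False by (simp add: splice_def)
    qed
  qed auto
  then show ?thesis
    unfolding seq_space_def by (simp add: fun_eq_iff)
qed

lemma borel_measurable_cost_from:
  assumes "decisions_measurable A F n"
  shows "cost_from A F n i \<in> borel_measurable seq_space"
  unfolding cost_from_def using borel_measurable_real_osdc_T[OF assms] by measurable

lemma borel_measurable_cost_from_splice:
  assumes "decisions_measurable A F n" "sets F = sets borel"
  shows "(\<lambda>y. cost_from A F n i (splice i' w y)) \<in> borel_measurable (PiM J (\<lambda>_. F))"
  using measurable_compose[OF measurable_splice[OF assms(2)] borel_measurable_cost_from[OF assms(1)]]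
  by (simp add: comp_def)

lemma splice_fun_upd: "splice m w (y(m := x)) = splice (Suc m) (w(m := x)) y"
  by (auto simp: splice_def fun_eq_iff)

lemma exp_cost_from_after_horizon: "exp_cost_from A F n (Suc n) w = 0"
  by (simp add: exp_cost_from_def cost_from_def)

lemma exp_cost_from_step:
  assumes fam: "F \<in> dist_family" and dm: "decisions_measurable A F n" and m: "1 \<le> m" "m \<le> n"
  shows "exp_cost_from A F n m w =
    (\<integral>\<^sup>+x. ennreal (real (osdc_T A F n (w(m := x)) m) * x) + exp_cost_from A F n (Suc m) (w(m := x)) \<partial>F)"
proof -
  interpret F: real_distribution F
    using dist_familyD[OF fam] by simp
  interpret PS: product_sigma_finite "\<lambda>_. F"
    unfolding product_sigma_finite_def by (simp add: F.sigma_finite_measure_axioms)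
  interpret PI: prob_space "PiM {Suc m..n} (\<lambda>_. F)"
    by (rule prob_space_PiM) (simp add: F.prob_space_axioms)
  have cost_from_fun_upd: "cost_from A F n m (splice m w (y(m := x))) =
      ennreal (real (osdc_T A F n (w(m := x)) m) * x) + cost_from A F n (Suc m) (splice (Suc m) (w(m := x)) y)"
    for x y
  proof -
    have "osdc_T A F n (splice (Suc m) (w(m := x)) y) m = osdc_T A F n (w(m := x)) m"
      by (rule osdc_T_cong) (auto simp: splice_def)
    then show ?thesis
      unfolding splice_fun_upd cost_from_def using m by (simp add: sum.atLeast_Suc_atMost splice_def)
  qed
  have "{m..n} = insert m {Suc m..n}"
    using m by auto
  then have "exp_cost_from A F n m w =
      (\<integral>\<^sup>+x. (\<integral>\<^sup>+y. cost_from A F n m (splice m w (y(m := x))) \<partial>PiM {Suc m..n} (\<lambda>_. F)) \<partial>F)"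
    unfolding exp_cost_from_def
    by (simp only:) (rule PS.product_nn_integral_insert_rev,
        auto intro!: borel_measurable_cost_from_splice[OF dm])
  also have "\<dots> = (\<integral>\<^sup>+x. ennreal (real (osdc_T A F n (w(m := x)) m) * x) +
      exp_cost_from A F n (Suc m) (w(m := x)) \<partial>F)"
    unfolding cost_from_fun_upd exp_cost_from_def
    by (intro nn_integral_cong, subst nn_integral_add)
       (auto intro!: borel_measurable_cost_from_splice[OF dm] simp: PI.emeasure_space_1)
  finally show ?thesis .
qed

lemma AE_iid_nonneg:
  assumes fam: "F \<in> dist_family"
  shows "AE y in iid F n. \<forall>j\<in>{1..n}. 0 \<le> y j"
proof -
  interpret F: real_distribution F
    using dist_familyD[OF fam] by simp
  show ?thesis
    unfolding iid_def
    by (intro eventually_ball_finite ballI AE_PiM_component)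
       (auto simp: F.prob_space_axioms dist_familyD(2)[OF fam])
qed

lemma ALG_eq_exp_cost_from:
  assumes fam: "F \<in> dist_family"
  shows "ALG A n F = exp_cost_from A F n 1 w"
proof -
  have "cost_from A F n 1 (splice 1 w y) = cost_from A F n 1 y" for y
    unfolding cost_from_def
  proof (intro sum.cong refl)
    fix j assume "j \<in> {1..n}"
    moreover have "osdc_T A F n (splice 1 w y) j = osdc_T A F n y j"
      by (rule osdc_T_cong) (auto simp: splice_def)
    ultimately show "ennreal (real (osdc_T A F n (splice 1 w y) j) * splice 1 w y j)
        = ennreal (real (osdc_T A F n y j) * y j)"
      by (simp add: splice_def)
  qed
  then have "exp_cost_from A F n 1 w = (\<integral>\<^sup>+y. cost_from A F n 1 y \<partial>iid F n)"
    by (simp add: exp_cost_from_def iid_def)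
  also have "\<dots> = ALG A n F"
    unfolding ALG_def using AE_iid_nonneg[OF fam, of n]
    by (intro nn_integral_cong_AE, eventually_elim)
       (unfold osdc_cost_def cost_from_def, subst sum_ennreal, auto)
  finally show ?thesis ..
qed

lemma dp_value_le_exp_cost_from:
  assumes fam: "F \<in> dist_family" and fo: "covers_when_forced A F n"
    and dm: "decisions_measurable A F n"
  shows "m \<le> Suc n \<Longrightarrow> 1 \<le> m \<Longrightarrow>
    dp_value F (Suc n - m) (n - osdc_cov A F n w (m - 1)) \<le> exp_cost_from A F n m w"
proof (induction m arbitrary: w rule: inc_induct)
  case base
  have "n \<le> osdc_cov A F n w n"
    by (rule osdc_cov_ge[OF fo])
  then show ?case
    by (simp add: dp_value_def)
next
  case (step m)
  have mn: "m \<le> n"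
    using step.hyps by simp
  define c where "c = osdc_cov A F n w (m - 1)"
  define T where "T x = osdc_T A F n (w(m := x)) m" for x
  have c_ge: "m - 1 \<le> c"
    unfolding c_def by (rule osdc_cov_ge[OF fo])
  have k_le: "n - c \<le> Suc n - m"
    using c_ge step by linarith
  have T_ge_1: "1 \<le> T x" if "n - c = Suc n - m" for x
    unfolding T_def using step that c_ge
    by (intro osdc_T_fun_upd_ge_1[OF fo]) (auto simp: c_def)
  have "dp_step_cost F (Suc n - m) (n - c) x
      \<le> ennreal (real (T x) * x) + exp_cost_from A F n (Suc m) (w(m := x))" for x
  proof -
    have "osdc_cov A F n (w(m := x)) m = c + T x"
      unfolding c_def T_def using step.prems by (rule osdc_cov_fun_upd)
    moreover have "dp_value F (n - m) (n - osdc_cov A F n (w(m := x)) m)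
        \<le> exp_cost_from A F n (Suc m) (w(m := x))"
      using step.IH[of "w(m := x)"] by (simp add: fun_upd_def)
    ultimately have "dp_value F (Suc n - m - 1) (n - c - T x) \<le> exp_cost_from A F n (Suc m) (w(m := x))"
      by (simp add: diff_diff_left)
    then show ?thesis
      using dp_step_cost_le[OF k_le T_ge_1] by (rule add_left_mono[THEN order.trans[rotated]])
  qed
  then have "dp_value F (Suc n - m) (n - c) \<le> exp_cost_from A F n m w"
    unfolding nn_integral_dp_step_cost[OF fam k_le, symmetric] T_def exp_cost_from_step[OF fam dm step.prems mn]
    by (intro nn_integral_mono)
  then show ?case
    by (simp add: c_def)
qed

lemma dp_value_le_ALG:
  assumes "F \<in> dist_family" "covers_when_forced A F n" "decisions_measurable A F n"
  shows "ennreal (\<Sum>s=1..n. dp_val F s) \<le> ALG A n F"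
  using dp_value_le_exp_cost_from[OF assms, of 1 undefined]
  by (simp add: dp_value_eq_sum[OF assms(1)] ALG_eq_exp_cost_from[OF assms(1), of _ _ undefined])

definition dp_buys :: "real measure \<Rightarrow> nat \<Rightarrow> nat \<Rightarrow> nat \<Rightarrow> real \<Rightarrow> bool" where
  "dp_buys F r k s x \<longleftrightarrow> r - k + s - 1 = 0 \<or> x \<le> dp_val F (r - k + s - 1)"

definition dp_count :: "real measure \<Rightarrow> nat \<Rightarrow> nat \<Rightarrow> real \<Rightarrow> nat" where
  "dp_count F r k x = card {s\<in>{1..k}. dp_buys F r k s x}"

text \<open>The \<open>max\<close> only matters after the horizon, where admissibility still demands a purchase.\<close>

definition dp_alg :: osdc_alg where
  "dp_alg F n i xs l =
     (let t = dp_count F (Suc n - i) (n - l) (last xs) in if l + 1 = i then max 1 t else t)"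

lemma downclosed_Collect_atLeastAtMost:
  assumes "\<And>s s'. 1 \<le> s \<Longrightarrow> s \<le> s' \<Longrightarrow> s' \<le> k \<Longrightarrow> P s' \<Longrightarrow> P s"
  shows "{s\<in>{1..k}. P s} = {1..card {s\<in>{1..k}. P s}}"
  using assms
proof (induction k)
  case 0
  then show ?case by simp
next
  case (Suc k)
  show ?case
  proof (cases "P (Suc k)")
    case True
    then have "{s\<in>{1..Suc k}. P s} = {1..Suc k}"
      using Suc.prems by auto
    then show ?thesis by simp
  next
    case False
    then have "{s\<in>{1..Suc k}. P s} = {s\<in>{1..k}. P s}"
      by (auto simp: le_Suc_eq)
    moreover have "{s\<in>{1..k}. P s} = {1..card {s\<in>{1..k}. P s}}"
      by (rule Suc.IH) (use Suc.prems in auto)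
    ultimately show ?thesis by simp
  qed
qed

lemma dp_buys_downclosed:
  assumes fam: "F \<in> dist_family" and "1 \<le> s" "s \<le> s'" "s' \<le> k" "dp_buys F r k s' x"
  shows "dp_buys F r k s x"
proof (cases "r - k + s - 1 = 0")
  case False
  then have "x \<le> dp_val F (r - k + s' - 1)"
    using assms unfolding dp_buys_def by auto
  also have "\<dots> \<le> dp_val F (r - k + s - 1)"
    using False assms by (intro dp_val_antimono[OF fam]) auto
  finally show ?thesis
    by (simp add: dp_buys_def)
qed (simp add: dp_buys_def)

lemma dp_buys_eq_atLeastAtMost:
  assumes "F \<in> dist_family"
  shows "{s\<in>{1..k}. dp_buys F r k s x} = {1..dp_count F r k x}"
  unfolding dp_count_def by (rule downclosed_Collect_atLeastAtMost) (rule dp_buys_downclosed[OF assms])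

lemma dp_count_le: "dp_count F r k x \<le> k"
  unfolding dp_count_def by (rule order.trans[OF card_mono[of "{1..k}"]]) auto

lemma dp_count_ge_1:
  assumes "k = r" "1 \<le> k"
  shows "1 \<le> dp_count F r k x"
proof -
  have "1 \<in> {s\<in>{1..k}. dp_buys F r k s x}"
    using assms by (auto simp: dp_buys_def)
  then have "{s\<in>{1..k}. dp_buys F r k s x} \<noteq> {}"
    by blast
  then show ?thesis
    unfolding dp_count_def by (simp add: Suc_le_eq card_gt_0_iff)
qed

lemma dp_step_cost_eq:
  assumes fam: "F \<in> dist_family" and "k \<le> r" "0 \<le> x"
  shows "dp_step_cost F r k x = ennreal (real (dp_count F r k x) * x) + dp_value F (r - 1) (k - dp_count F r k x)"
proof (cases "k = 0")
  case True
  then show ?thesis by (simp add: dp_step_cost_def dp_value_def dp_count_def)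
next
  case False
  define T where "T = dp_count F r k x"
  have T_le: "T \<le> k"
    unfolding T_def by (rule dp_count_le)
  have forced: "k < r \<or> 1 \<le> T"
    using dp_count_ge_1[of k r F x] False assms unfolding T_def by linarith
  have buys: "{s\<in>{1..k}. dp_buys F r k s x} = {1..T}"
    unfolding T_def by (rule dp_buys_eq_atLeastAtMost[OF fam])
  have "(\<Sum>s=1..T. capped_price F (r - k + s - 1) x) = (\<Sum>s=1..T. ennreal x)"
    using buys by (intro sum.cong refl) (auto simp: capped_price_def dp_buys_def)
  also have "\<dots> = ennreal (real T * x)"
    by (simp add: ennreal_real_of_nat_mult)
  finally have now: "(\<Sum>s=1..T. capped_price F (r - k + s - 1) x) = ennreal (real T * x)" .
  have later: "(\<Sum>s=1..k-T. capped_price F ((r - 1) - (k - T) + s) x) = dp_value F (r - 1) (k - T)"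
    unfolding dp_value_def
  proof (intro sum.cong refl)
    fix s assume s: "s \<in> {1..k-T}"
    then have "s + T \<in> {1..k}" "s + T \<notin> {1..T}"
      using T_le by auto
    then have "\<not> dp_buys F r k (s + T) x"
      using buys by blast
    moreover have "(r - 1) - (k - T) + s = r - k + (s + T) - 1"
      using s assms forced T_le by auto
    ultimately show "capped_price F ((r - 1) - (k - T) + s) x = ennreal (dp_val F ((r - 1) - (k - T) + s))"
      by (auto simp: capped_price_def dp_buys_def)
  qed
  have "dp_step_cost F r k x = ennreal (real T * x) + dp_value F (r - 1) (k - T)"
    unfolding dp_step_cost_split[OF T_le assms(2) forced] now later ..
  then show ?thesis
    by (simp only: T_def)
qed

lemma measurable_dp_count: "dp_count F r k \<in> borel \<rightarrow>\<^sub>M count_space UNIV"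
proof (subst measurable_count_space_eq2_countable, intro conjI ballI)
  fix a :: nat
  have "dp_count F r k -` {a} \<inter> space borel =
      {x. \<exists>B\<in>Pow {1..k}. card B = a \<and> (\<forall>s\<in>{1..k}. dp_buys F r k s x \<longleftrightarrow> s \<in> B)}"
  proof (intro set_eqI iffI)
    fix x assume "x \<in> dp_count F r k -` {a} \<inter> space borel"
    then show "x \<in> {x. \<exists>B\<in>Pow {1..k}. card B = a \<and> (\<forall>s\<in>{1..k}. dp_buys F r k s x \<longleftrightarrow> s \<in> B)}"
      by (intro CollectI bexI[of _ "{s\<in>{1..k}. dp_buys F r k s x}"]) (auto simp: dp_count_def)
  next
    fix x assume "x \<in> {x. \<exists>B\<in>Pow {1..k}. card B = a \<and> (\<forall>s\<in>{1..k}. dp_buys F r k s x \<longleftrightarrow> s \<in> B)}"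
    then obtain B where "B \<subseteq> {1..k}" "card B = a" "\<forall>s\<in>{1..k}. dp_buys F r k s x \<longleftrightarrow> s \<in> B"
      by auto
    then have "{s\<in>{1..k}. dp_buys F r k s x} = B" "card B = a"
      by auto
    then show "x \<in> dp_count F r k -` {a} \<inter> space borel"
      by (simp add: dp_count_def)
  qed
  also have "\<dots> \<in> sets borel"
    unfolding dp_buys_def by measurable
  finally show "dp_count F r k -` {a} \<inter> space borel \<in> sets borel" .
qed auto

lemma dp_alg_covers_when_forced: "covers_when_forced dp_alg F n"
  unfolding covers_when_forced_def dp_alg_def by (auto simp: Let_def)

lemma dp_alg_decisions_measurable: "decisions_measurable dp_alg F n"
  unfolding decisions_measurable_def
proof (intro allI)
  fix i l
  define g where "g x = (let t = dp_count F (Suc n - i) (n - l) x in if l + 1 = i then max 1 t else t)" for x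
  have "g \<in> borel \<rightarrow>\<^sub>M count_space UNIV"
    unfolding g_def Let_def by (rule measurable_compose[OF measurable_dp_count]) simp
  then have g: "(\<lambda>w. g (w i)) \<in> seq_space \<rightarrow>\<^sub>M count_space UNIV"
    by measurable
  show "(\<lambda>w. dp_alg F n i (map w [1..<Suc i]) l) \<in> seq_space \<rightarrow>\<^sub>M count_space UNIV"
  proof (cases i)
    case (Suc i')
    then have "(\<lambda>w. dp_alg F n i (map w [1..<Suc i]) l) = (\<lambda>w. g (w i))"
      unfolding g_def dp_alg_def by (auto simp: fun_eq_iff last_map)
    then show ?thesis using g by simp
  qed simp
qed

lemma osdc_T_dp_alg:
  assumes "1 \<le> m" "m \<le> n" "m - 1 \<le> osdc_cov dp_alg F n w (m - 1)"
  shows "osdc_T dp_alg F n (w(m := x)) m = dp_count F (Suc n - m) (n - osdc_cov dp_alg F n w (m - 1)) x"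
proof -
  define c where "c = osdc_cov dp_alg F n w (m - 1)"
  have "osdc_cov dp_alg F n (w(m := x)) (m - 1) = c"
    unfolding c_def by (rule osdc_cov_cong) auto
  moreover have "last (map (w(m := x)) [1..<Suc m]) = x"
    using assms by (simp add: last_map)
  moreover have "1 \<le> dp_count F (Suc n - m) (n - c) x" if "c + 1 = m"
    using that assms by (intro dp_count_ge_1) auto
  ultimately show ?thesis
    unfolding osdc_T_def c_def[symmetric] dp_alg_def Let_def by auto
qed

lemma exp_cost_from_dp_alg:
  assumes fam: "F \<in> dist_family"
  shows "m \<le> Suc n \<Longrightarrow> 1 \<le> m \<Longrightarrow>
    exp_cost_from dp_alg F n m w = dp_value F (Suc n - m) (n - osdc_cov dp_alg F n w (m - 1))"
proof (induction m arbitrary: w rule: inc_induct)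
  case base
  have "n \<le> osdc_cov dp_alg F n w n"
    by (rule osdc_cov_ge[OF dp_alg_covers_when_forced])
  then show ?case
    by (simp add: dp_value_def exp_cost_from_after_horizon)
next
  case (step m)
  have mn: "m \<le> n"
    using step.hyps by simp
  define c where "c = osdc_cov dp_alg F n w (m - 1)"
  define T where "T x = osdc_T dp_alg F n (w(m := x)) m" for x
  have c_ge: "m - 1 \<le> c"
    unfolding c_def by (rule osdc_cov_ge[OF dp_alg_covers_when_forced])
  have k_le: "n - c \<le> Suc n - m"
    using c_ge step by linarith
  have T_eq: "T x = dp_count F (Suc n - m) (n - c) x" for x
    using osdc_T_dp_alg[OF step.prems mn, of F w x] c_ge unfolding T_def c_def by simp
  have "exp_cost_from dp_alg F n (Suc m) (w(m := x)) = dp_value F (Suc n - m - 1) (n - c - T x)" for x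
  proof -
    have "osdc_cov dp_alg F n (w(m := x)) m = c + T x"
      unfolding c_def T_def using step.prems by (rule osdc_cov_fun_upd)
    moreover have "exp_cost_from dp_alg F n (Suc m) (w(m := x))
        = dp_value F (n - m) (n - osdc_cov dp_alg F n (w(m := x)) m)"
      using step.IH[of "w(m := x)"] by (simp add: fun_upd_def)
    ultimately show ?thesis
      by (simp add: diff_diff_left)
  qed
  then have "exp_cost_from dp_alg F n m w = (\<integral>\<^sup>+x. dp_step_cost F (Suc n - m) (n - c) x \<partial>F)"
    unfolding exp_cost_from_step[OF fam dp_alg_decisions_measurable step.prems mn] T_def[symmetric]
    using dist_familyD(2)[OF fam]
    by (intro nn_integral_cong_AE) (auto elim!: eventually_mono simp: dp_step_cost_eq[OF fam k_le] T_eq)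
  also have "\<dots> = dp_value F (Suc n - m) (n - c)"
    by (rule nn_integral_dp_step_cost[OF fam k_le])
  finally show ?case
    by (simp add: c_def)
qed

lemma ALG_dp_alg:
  assumes "F \<in> dist_family"
  shows "ALG dp_alg n F = ennreal (\<Sum>s=1..n. dp_val F s)"
  using exp_cost_from_dp_alg[OF assms, of 1 n undefined]
  by (simp add: dp_value_eq_sum[OF assms] ALG_eq_exp_cost_from[OF assms, of _ _ undefined])

lemma dp_alg_admissible: "admissible n dp_alg"
  unfolding admissible_def
proof (intro conjI ballI)
  show "\<forall>F i xs l. 1 \<le> i \<longrightarrow> l = i - 1 \<longrightarrow> 1 \<le> dp_alg F n i xs l"
    using dp_alg_covers_when_forced unfolding covers_when_forced_def by blast
  fix F assume fam: "F \<in> dist_family"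
  have "osdc_cost dp_alg F n \<in> borel_measurable seq_space"
    unfolding osdc_cost_def using borel_measurable_real_osdc_T[OF dp_alg_decisions_measurable]
    by measurable
  moreover have "splice 0 w \<in> iid F n \<rightarrow>\<^sub>M seq_space" for w
    unfolding iid_def using dist_familyD(1)[OF fam] by (intro measurable_splice) (simp add: real_distribution.events_eq_borel)
  moreover have "splice 0 w y = y" for w y
    by (simp add: splice_def)
  ultimately show "osdc_cost dp_alg F n \<in> borel_measurable (iid F n)"
    using measurable_compose[of "splice 0 undefined" "iid F n" seq_space "osdc_cost dp_alg F n" borel]
    by (simp add: comp_def)
qed


section \<open>Distributions as monotone images of the uniform distribution\<close>

abbreviation Unif :: "real measure" where
  "Unif \<equiv> restrict_space lborel {0<..<1}"

lemma prob_space_Unif: "prob_space Unif"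
  by (rule prob_spaceI) (simp add: space_restrict_space emeasure_restrict_space)

lemma space_Unif: "space Unif = {0<..<1}"
  by (simp add: space_restrict_space)

lemma borel_measurable_mono_on_Unif:
  fixes g :: "real \<Rightarrow> real"
  assumes "mono_on {0<..<1} g"
  shows "g \<in> borel_measurable Unif"
  using borel_measurable_mono_on_fnc[OF assms] by (simp add: measurable_cong_sets sets_restrict_space)

lemma borel_measurable_Unif_component:
  assumes "j \<in> I"
  shows "(\<lambda>v. v j) \<in> borel_measurable (PiM I (\<lambda>_. Unif))"
proof -
  have "(\<lambda>v. v j) \<in> PiM I (\<lambda>_. Unif) \<rightarrow>\<^sub>M Unif"
    using assms by simp
  moreover have "(\<lambda>x. x) \<in> Unif \<rightarrow>\<^sub>M borel"
    by (rule measurable_restrict_space1) simp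
  ultimately show ?thesis
    using measurable_compose by blast
qed

lemma Min_image_atLeastAtMost_Suc:
  assumes "1 \<le> i"
  shows "Min (v ` {1..Suc i}) = min (v (Suc i)) (Min (v ` {1..i}))"
proof -
  have "{1..Suc i} = insert (Suc i) {1..i}"
    by auto
  then show ?thesis
    using assms by (simp add: Min_insert)
qed

lemma borel_measurable_Min_prefix:
  fixes N :: "(nat \<Rightarrow> real) measure"
  assumes "\<And>j. j \<in> {1..n} \<Longrightarrow> (\<lambda>v. v j) \<in> borel_measurable N"
  shows "1 \<le> i \<Longrightarrow> i \<le> n \<Longrightarrow> (\<lambda>v. Min (v ` {1..i})) \<in> borel_measurable N"
proof (induction i rule: dec_induct)
  case base
  then show ?case using assms[of 1] by simp
next
  case (step i)
  have "(\<lambda>v. min (v (Suc i)) (Min (v ` {1..i}))) \<in> borel_measurable N"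
    by (intro borel_measurable_min) (use assms[of "Suc i"] step in auto)
  then show ?case
    unfolding Min_image_atLeastAtMost_Suc[OF step(1)] .
qed

lemma has_integral_power_one_minus:
  assumes "0 \<le> a" "a \<le> 1" "1 \<le> i"
  shows "((\<lambda>u. real i * (1 - u) ^ (i - 1)) has_integral (1 - a) ^ i) {a<..<1}"
proof -
  have "((\<lambda>u. real i * (1 - u) ^ (i - 1)) has_integral (- ((1 - 1) ^ i) - - ((1 - a) ^ i))) {a..1}"
  proof (rule fundamental_theorem_of_calculus)
    fix x :: real
    have "((\<lambda>u. - ((1 - u) ^ i)) has_real_derivative (real i * (1 - x) ^ (i - 1))) (at x within {a..1})"
      by (auto intro!: derivative_eq_intros)
    then show "((\<lambda>u. - ((1 - u) ^ i)) has_vector_derivative real i * (1 - x) ^ (i - 1)) (at x within {a..1})"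
      by (simp add: has_real_derivative_iff_has_vector_derivative)
  qed (use assms in auto)
  then have "((\<lambda>u. real i * (1 - u) ^ (i - 1)) has_integral (1 - a) ^ i) {a..1}"
    using assms by (simp add: zero_power)
  moreover have "box a 1 = {a<..<1}" "cbox a 1 = {a..1}"
    by (auto simp: box_def cbox_def)
  ultimately show ?thesis
    using has_integral_open_interval[of "\<lambda>u. real i * (1 - u) ^ (i - 1)" "(1 - a) ^ i" a 1] by simp
qed

lemma emeasure_Min_Unif_greaterThan:
  assumes i: "1 \<le> i" "i \<le> n"
  shows "emeasure (distr (PiM {1..n} (\<lambda>_. Unif)) borel (\<lambda>v. Min (v ` {1..i}))) {x<..}
    = emeasure lborel ({x<..} \<inter> {0<..<1}) ^ i"
proof -
  let ?P = "PiM {1..n} (\<lambda>_. Unif)"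
  have vm: "(\<lambda>v. Min (v ` {1..i})) \<in> borel_measurable ?P"
    by (rule borel_measurable_Min_prefix[OF borel_measurable_Unif_component i]) auto
  have "(\<lambda>v. Min (v ` {1..i})) -` {x<..} \<inter> space ?P
      = prod_emb {1..n} (\<lambda>_. Unif) {1..i} (PiE {1..i} (\<lambda>_. {x<..} \<inter> {0<..<1}))"
  proof -
    have "Min (v ` {1..i}) > x \<longleftrightarrow> (\<forall>j\<in>{1..i}. x < v j)" for v
      using i by (subst Min_gr_iff) auto
    then show ?thesis
      unfolding prod_emb_def using i by (auto simp: space_PiM space_Unif PiE_iff restrict_def)
  qed
  then have "emeasure (distr ?P borel (\<lambda>v. Min (v ` {1..i}))) {x<..}
      = emeasure ?P (prod_emb {1..n} (\<lambda>_. Unif) {1..i} (PiE {1..i} (\<lambda>_. {x<..} \<inter> {0<..<1})))"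
    using emeasure_distr[OF vm, of "{x<..}"] by simp
  also have "\<dots> = (\<Prod>j\<in>{1..i}. emeasure Unif ({x<..} \<inter> {0<..<1}))"
    using i by (intro emeasure_PiM_emb) (auto simp: prob_space_Unif sets_restrict_space)
  also have "\<dots> = emeasure lborel ({x<..} \<inter> {0<..<1}) ^ i"
    by (simp add: emeasure_restrict_space)
  finally show ?thesis .
qed

lemma distr_Min_Unif:
  assumes i: "1 \<le> i" "i \<le> n"
  shows "distr (PiM {1..n} (\<lambda>_. Unif)) borel (\<lambda>v. Min (v ` {1..i})) =
    density lborel (\<lambda>u. ennreal (indicator {0<..<1} u * (real i * (1 - u) ^ (i - 1))))"
    (is "?L = ?R")
proof (rule measure_eqI_lessThan)
  interpret P: prob_space "PiM {1..n} (\<lambda>_. Unif)"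
    by (rule prob_space_PiM) (simp add: prob_space_Unif)
  have "(\<lambda>v. Min (v ` {1..i})) \<in> borel_measurable (PiM {1..n} (\<lambda>_. Unif))"
    by (rule borel_measurable_Min_prefix[OF borel_measurable_Unif_component i]) auto
  then interpret L: prob_space ?L
    by (rule P.prob_space_distr)
  fix x :: real
  show "emeasure ?L {x<..} < \<infinity>"
    using L.emeasure_finite[of "{x<..}"] by (simp add: less_top)
  have "emeasure ?R {x<..} = (\<integral>\<^sup>+u. ennreal (indicator {max 0 x<..<1} u * (real i * (1 - u) ^ (i - 1))) \<partial>lborel)"
    by (subst emeasure_density) (auto intro!: nn_integral_cong simp: indicator_def)
  also have "\<dots> = emeasure lborel ({x<..} \<inter> {0<..<1}) ^ i"
  proof (cases "x < 1")
    case True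
    then have "{x<..} \<inter> {0<..<1} = {max 0 x<..<1}"
      by auto
    moreover have "(\<integral>\<^sup>+u. ennreal (indicator {max 0 x<..<1} u * (real i * (1 - u) ^ (i - 1))) \<partial>lborel)
        = ennreal ((1 - max 0 x) ^ i)"
      using True i by (intro nn_integral_has_integral_lebesgue has_integral_power_one_minus) auto
    ultimately show ?thesis
      using True by (simp add: ennreal_power)
  next
    case False
    then have "{x<..} \<inter> {0<..<1} = {}" "{max 0 x<..<1} = {}"
      by auto
    then show ?thesis
      using i by (simp add: zero_power)
  qed
  finally show "emeasure ?L {x<..} = emeasure ?R {x<..}"
    using emeasure_Min_Unif_greaterThan[OF i] by simp
qed simp_all

lemma mono_on_Min_image:
  assumes "mono_on S g" "finite A" "A \<noteq> {}" "A \<subseteq> S"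
  shows "Min (g ` A) = g (Min A)"
  using assms(2,3,4)
proof (induction A rule: finite_ne_induct)
  case (singleton x)
  then show ?case by simp
next
  case (insert x A)
  have "Min A \<in> A"
    using insert.hyps by simp
  then have "Min A \<in> S" "x \<in> S"
    using insert.prems by auto
  then have "min (g x) (g (Min A)) = g (min x (Min A))"
    using assms(1) by (cases "x \<le> Min A") (auto simp: min_def dest: mono_onD)
  then show ?case
    using insert by simp
qed

lemma real_distribution_distr_Unif:
  fixes g :: "real \<Rightarrow> real"
  assumes "mono_on {0<..<1} g"
  shows "real_distribution (distr Unif borel g)"
proof -
  interpret prob_space Unif
    by (rule prob_space_Unif)
  show ?thesis
    by (auto simp: real_distribution_def real_distribution_axioms_def
        intro!: prob_space_distr borel_measurable_mono_on_Unif[OF assms])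
qed

lemma measurable_distr_Unif:
  fixes g :: "real \<Rightarrow> real"
  assumes g: "mono_on {0<..<1} g"
  shows "g \<in> Unif \<rightarrow>\<^sub>M distr Unif borel g"
  using borel_measurable_mono_on_Unif[OF g] measurable_cong_sets[OF refl sets_distr] by blast

lemma measurable_compose_Unif:
  fixes g :: "real \<Rightarrow> real"
  assumes g: "mono_on {0<..<1} g"
  shows "compose I g \<in> PiM I (\<lambda>_. Unif) \<rightarrow>\<^sub>M PiM I (\<lambda>_. distr Unif borel g)"
proof -
  have "(\<lambda>v j. compose I g v j) \<in> PiM I (\<lambda>_. Unif) \<rightarrow>\<^sub>M PiM I (\<lambda>_. distr Unif borel g)"
  proof (rule measurable_PiM_single')
    fix j assume j: "j \<in> I"
    show "(\<lambda>v. compose I g v j) \<in> PiM I (\<lambda>_. Unif) \<rightarrow>\<^sub>M distr Unif borel g"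
      using measurable_compose[OF measurable_component_singleton[OF j] measurable_distr_Unif[OF g]] j
      by (simp add: compose_def)
  qed (auto simp: compose_def)
  then show ?thesis
    by simp
qed

lemma iid_distr_Unif:
  fixes g :: "real \<Rightarrow> real"
  assumes g: "mono_on {0<..<1} g"
  shows "iid (distr Unif borel g) n =
    distr (PiM {1..n} (\<lambda>_. Unif)) (PiM {1..n} (\<lambda>_. distr Unif borel g)) (compose {1..n} g)"
proof -
  interpret F: real_distribution "distr Unif borel g"
    by (rule real_distribution_distr_Unif[OF g])
  have "distr (PiM {1..n} (\<lambda>_. Unif)) (PiM {1..n} (\<lambda>_. distr Unif borel g)) (compose {1..n} g)
      = PiM {1..n} (\<lambda>i. distr Unif (distr Unif borel g) g)"
    by (rule distr_PiM_finite_prob_space')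
       (auto simp: prob_space_Unif F.prob_space_axioms measurable_distr_Unif[OF g]
          borel_measurable_mono_on_Unif[OF g])
  also have "distr Unif (distr Unif borel g) g = distr Unif borel g"
    by (rule distr_cong) auto
  finally show ?thesis
    unfolding iid_def by simp
qed

lemma Min_compose_Unif:
  fixes g :: "real \<Rightarrow> real" and n i :: nat
  assumes g: "mono_on {0<..<1} g" and v: "v \<in> space (PiM {1..n} (\<lambda>_. Unif))" and i: "i \<in> {1..n}"
  shows "Min (v ` {1..i}) \<in> {0<..<1}" "Min (compose {1..n} g v ` {1..i}) = g (Min (v ` {1..i}))"
proof -
  have v_unit: "v j \<in> {0<..<1}" if "j \<in> {1..n}" for j
    using v that by (auto simp: space_PiM space_Unif PiE_iff)
  have sub: "v ` {1..i} \<subseteq> {0<..<1}"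
    using i v_unit by auto
  moreover have "Min (v ` {1..i}) \<in> v ` {1..i}"
    using i by (intro Min_in) auto
  ultimately show "Min (v ` {1..i}) \<in> {0<..<1}"
    by blast
  have "compose {1..n} g v ` {1..i} = g ` v ` {1..i}"
    using i by (auto simp: compose_def image_image)
  then show "Min (compose {1..n} g v ` {1..i}) = g (Min (v ` {1..i}))"
    using sub i by (auto intro: mono_on_Min_image[OF g])
qed

lemma OPT_distr_Unif_eq_sum:
  fixes g :: "real \<Rightarrow> real"
  assumes g: "mono_on {0<..<1} g" and g_nonneg: "\<And>u. u \<in> {0<..<1} \<Longrightarrow> 0 \<le> g u"
  shows "OPT n (distr Unif borel g) =
    (\<Sum>i=1..n. \<integral>\<^sup>+v. ennreal (indicator {0<..<1} (Min (v ` {1..i})) * g (Min (v ` {1..i}))) \<partial>PiM {1..n} (\<lambda>_. Unif))"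
proof -
  let ?PU = "PiM {1..n} (\<lambda>_. Unif)"
  let ?PF = "PiM {1..n} (\<lambda>_. distr Unif borel g)"
  let ?G = "\<lambda>u. ennreal (indicator {0<..<1} u * g u)"
  have "(\<lambda>v. v j) \<in> borel_measurable ?PF" if "j \<in> {1..n}" for j
    using measurable_component_singleton[OF that] measurable_cong_sets[OF refl sets_distr] by blast
  then have opt_meas: "(\<lambda>w. ennreal (\<Sum>i=1..n. Min (w ` {1..i}))) \<in> borel_measurable ?PF"
    using borel_measurable_Min_prefix by measurable
  have "OPT n (distr Unif borel g) = (\<integral>\<^sup>+v. ennreal (\<Sum>i=1..n. Min (compose {1..n} g v ` {1..i})) \<partial>?PU)"
    unfolding OPT_def iid_distr_Unif[OF g]
    by (rule nn_integral_distr[OF measurable_compose_Unif[OF g]]) (use opt_meas in simp)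
  also have "\<dots> = (\<integral>\<^sup>+v. (\<Sum>i=1..n. ?G (Min (v ` {1..i}))) \<partial>?PU)"
  proof (intro nn_integral_cong)
    fix v assume v: "v \<in> space ?PU"
    have "ennreal (\<Sum>i=1..n. Min (compose {1..n} g v ` {1..i}))
        = ennreal (\<Sum>i=1..n. indicator {0<..<1} (Min (v ` {1..i})) * g (Min (v ` {1..i})))"
      using Min_compose_Unif[OF g v] by (intro arg_cong[where f=ennreal] sum.cong) auto
    also have "\<dots> = (\<Sum>i=1..n. ?G (Min (v ` {1..i})))"
      using Min_compose_Unif(1)[OF g v] g_nonneg by (intro sum_ennreal[symmetric]) auto
    finally show "ennreal (\<Sum>i=1..n. Min (compose {1..n} g v ` {1..i})) = (\<Sum>i=1..n. ?G (Min (v ` {1..i})))" .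
  qed
  also have "\<dots> = (\<Sum>i=1..n. \<integral>\<^sup>+v. ?G (Min (v ` {1..i})) \<partial>?PU)"
  proof (intro nn_integral_sum)
    fix i assume "i \<in> {1..n}"
    then have "(\<lambda>v. Min (v ` {1..i})) \<in> borel_measurable ?PU"
      by (intro borel_measurable_Min_prefix[OF borel_measurable_Unif_component]) auto
    moreover have "(\<lambda>u. indicator {0<..<1} u * g u) \<in> borel_measurable borel"
      using borel_measurable_mono_on_fnc[OF g] by (subst (asm) borel_measurable_restrict_space_iff) auto
    ultimately show "(\<lambda>v. ?G (Min (v ` {1..i}))) \<in> borel_measurable ?PU"
      by measurable
  qed
  finally show ?thesis .
qed

lemma nn_integral_Min_Unif:
  fixes n i :: nat
  assumes G: "G \<in> borel_measurable borel" and i: "i \<in> {1..n}"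
  shows "(\<integral>\<^sup>+v. G (Min (v ` {1..i})) \<partial>PiM {1..n} (\<lambda>_. Unif))
    = (\<integral>\<^sup>+u. ennreal (indicator {0<..<1} u * (real i * (1 - u) ^ (i - 1))) * G u \<partial>lborel)"
proof -
  have "(\<lambda>v. Min (v ` {1..i})) \<in> borel_measurable (PiM {1..n} (\<lambda>_. Unif))"
    using i by (intro borel_measurable_Min_prefix[OF borel_measurable_Unif_component]) auto
  then have "(\<integral>\<^sup>+v. G (Min (v ` {1..i})) \<partial>PiM {1..n} (\<lambda>_. Unif))
      = (\<integral>\<^sup>+u. G u \<partial>distr (PiM {1..n} (\<lambda>_. Unif)) borel (\<lambda>v. Min (v ` {1..i})))"
    using G by (simp add: nn_integral_distr)
  also have "\<dots> = (\<integral>\<^sup>+u. G u \<partial>density lborel (\<lambda>u. ennreal (indicator {0<..<1} u * (real i * (1 - u) ^ (i - 1)))))"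
    using i by (subst distr_Min_Unif) auto
  also have "\<dots> = (\<integral>\<^sup>+u. ennreal (indicator {0<..<1} u * (real i * (1 - u) ^ (i - 1))) * G u \<partial>lborel)"
    using G by (intro nn_integral_density) auto
  finally show ?thesis .
qed

lemma OPT_distr_Unif:
  fixes g :: "real \<Rightarrow> real"
  assumes g: "mono_on {0<..<1} g" and g_nonneg: "\<And>u. u \<in> {0<..<1} \<Longrightarrow> 0 \<le> g u"
  shows "OPT n (distr Unif borel g) = (\<integral>\<^sup>+u. ennreal (g u * Pn' n (1 - u)) \<partial>Unif)"
proof -
  define G where "G u = ennreal (indicator {0<..<1} u * g u)" for u
  define dens where "dens i u = ennreal (indicator {0<..<1} u * (real i * (1 - u) ^ (i - 1)))" for i u
  have G_meas: "G \<in> borel_measurable borel"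
    using borel_measurable_mono_on_fnc[OF g] unfolding G_def
    by (subst (asm) borel_measurable_restrict_space_iff) auto
  have "OPT n (distr Unif borel g) = (\<Sum>i=1..n. \<integral>\<^sup>+v. G (Min (v ` {1..i})) \<partial>PiM {1..n} (\<lambda>_. Unif))"
    by (simp only: OPT_distr_Unif_eq_sum[OF assms] G_def)
  also have "\<dots> = (\<Sum>i=1..n. \<integral>\<^sup>+u. dens i u * G u \<partial>lborel)"
    unfolding dens_def by (intro sum.cong refl nn_integral_Min_Unif[OF G_meas])
  also have "\<dots> = (\<integral>\<^sup>+u. (\<Sum>i=1..n. dens i u * G u) \<partial>lborel)"
    using G_meas by (intro nn_integral_sum[symmetric]) (auto simp: dens_def)
  also have "\<dots> = (\<integral>\<^sup>+u. ennreal (g u * Pn' n (1 - u)) * indicator {0<..<1} u \<partial>lborel)"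
  proof (intro nn_integral_cong)
    fix u :: real
    show "(\<Sum>i=1..n. dens i u * G u) = ennreal (g u * Pn' n (1 - u)) * indicator {0<..<1} u"
    proof (cases "u \<in> {0<..<1}")
      case True
      then have "(\<Sum>i=1..n. dens i u * G u) = (\<Sum>i=1..n. ennreal (g u * (real i * (1 - u) ^ (i - 1))))"
        using g_nonneg by (intro sum.cong refl) (auto simp: dens_def G_def ennreal_mult[symmetric] mult.commute)
      also have "\<dots> = ennreal (g u * Pn' n (1 - u))"
        using True g_nonneg by (subst sum_ennreal) (auto simp: Pn'_def sum_distrib_left)
      finally show ?thesis
        using True by simp
    qed (simp add: dens_def G_def)
  qed
  also have "\<dots> = (\<integral>\<^sup>+u. ennreal (g u * Pn' n (1 - u)) \<partial>Unif)"
    by (subst nn_integral_restrict_space) auto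
  finally show ?thesis .
qed

lemma bounded_on_Unif:
  fixes \<phi> :: "real \<Rightarrow> real"
  assumes m: "\<phi> \<in> borel_measurable Unif" and b: "\<And>u. u \<in> {0<..<1} \<Longrightarrow> \<bar>\<phi> u\<bar> \<le> B"
  shows integrable_Unif_bounded: "integrable Unif \<phi>"
    and integral_Unif_eq_integral: "integral\<^sup>L Unif \<phi> = integral {0..1} \<phi>"
    and integrable_on_Unif_bounded: "\<phi> integrable_on {0..1}"
proof -
  have "(\<lambda>x. indicator {0<..<1} x *\<^sub>R \<phi> x) \<in> borel_measurable lborel"
    using m by (subst (asm) borel_measurable_restrict_space_iff) auto
  then have si: "set_integrable lborel {0<..<1} \<phi>"
    unfolding set_integrable_def
    by (intro integrableI_bounded_set[where A="{0<..<1}" and B=B]) (use b in \<open>auto simp: indicator_def\<close>)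
  then show "integrable Unif \<phi>"
    unfolding set_integrable_def by (subst integrable_restrict_space) auto
  have "integral\<^sup>L Unif \<phi> = set_lebesgue_integral lborel {0<..<1} \<phi>"
    unfolding set_lebesgue_integral_def by (subst integral_restrict_space) auto
  also have "\<dots> = integral {0<..<1} \<phi>"
    by (rule set_borel_integral_eq_integral(2)[OF si])
  also have "\<dots> = integral {0..1} \<phi>"
    by (rule integral_open_interval_real[symmetric])
  finally show "integral\<^sup>L Unif \<phi> = integral {0..1} \<phi>" .
  have "\<phi> integrable_on {0<..<1}"
    by (rule set_borel_integral_eq_integral(1)[OF si])
  moreover have "box 0 1 = {0<..<1::real}" "cbox 0 1 = {0..1::real}"
    by (auto simp: box_def cbox_def)
  ultimately show "\<phi> integrable_on {0..1}"
    using has_integral_open_interval[of \<phi> _ 0 1] unfolding integrable_on_def by auto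
qed

lemma nn_integral_Unif_eq_integral:
  fixes \<phi> :: "real \<Rightarrow> real"
  assumes "\<phi> \<in> borel_measurable Unif" "\<And>u. u \<in> {0<..<1} \<Longrightarrow> \<bar>\<phi> u\<bar> \<le> B"
    and "\<And>u. u \<in> {0<..<1} \<Longrightarrow> 0 \<le> \<phi> u"
  shows "(\<integral>\<^sup>+u. ennreal (\<phi> u) \<partial>Unif) = ennreal (integral {0..1} \<phi>)"
proof -
  have "integrable Unif \<phi>"
    by (rule integrable_Unif_bounded[OF assms(1,2)])
  moreover have "AE u in Unif. 0 \<le> \<phi> u"
    using assms(3) by (intro AE_I2) (simp add: space_Unif)
  ultimately have "(\<integral>\<^sup>+u. ennreal (\<phi> u) \<partial>Unif) = ennreal (integral\<^sup>L Unif \<phi>)"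
    by (rule nn_integral_eq_integral)
  also have "integral\<^sup>L Unif \<phi> = integral {0..1} \<phi>"
    by (rule integral_Unif_eq_integral[OF assms(1,2)])
  finally show ?thesis .
qed

lemma integral_distr_Unif:
  fixes g f :: "real \<Rightarrow> real"
  assumes g: "mono_on {0<..<1} g" and "f \<in> borel_measurable borel"
    and "\<And>u. u \<in> {0<..<1} \<Longrightarrow> \<bar>f (g u)\<bar> \<le> B"
  shows "integral\<^sup>L (distr Unif borel g) f = integral {0..1} (\<lambda>u. f (g u))"
proof -
  have "(\<lambda>u. f (g u)) \<in> borel_measurable Unif"
    using measurable_compose[OF borel_measurable_mono_on_Unif[OF g] assms(2)] by (simp add: comp_def)
  then show ?thesis
    using integral_Unif_eq_integral[OF _ assms(3)] integral_distr[OF borel_measurable_mono_on_Unif[OF g] assms(2)]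
    by simp
qed

lemma distr_Unif_in_dist_family:
  fixes g :: "real \<Rightarrow> real"
  assumes g: "mono_on {0<..<1} g" and "\<And>u. u \<in> {0<..<1} \<Longrightarrow> 0 \<le> g u" and "integrable Unif g"
  shows "distr Unif borel g \<in> dist_family"
proof -
  have "AE x in distr Unif borel g. 0 \<le> x"
    using assms by (subst AE_distr_iff[OF borel_measurable_mono_on_Unif[OF g]]) (auto simp: space_Unif intro!: AE_I2)
  moreover have "integrable (distr Unif borel g) (\<lambda>x. x)"
    using assms by (subst integrable_distr_eq[OF borel_measurable_mono_on_Unif[OF g]]) auto
  ultimately show ?thesis
    unfolding dist_family_def using real_distribution_distr_Unif[OF g] by auto
qed

lemma quantile_representation:
  assumes fam: "F \<in> dist_family"
  shows "distr Unif borel (\<lambda>u. Inf {x. u \<le> cdf F x}) = F"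
    and "mono_on {0<..<1} (\<lambda>u. Inf {x. u \<le> cdf F x})"
    and "\<And>u. u \<in> {0<..<1} \<Longrightarrow> 0 \<le> Inf {x. u \<le> cdf F x}"
proof -
  interpret C: cdf_distribution F
    using dist_familyD(1)[OF fam] unfolding cdf_distribution_def .
  show "distr Unif borel (\<lambda>u. Inf {x. u \<le> cdf F x}) = F"
    by (rule C.distr_I_eq_M)
  show "mono_on {0<..<1} (\<lambda>u. Inf {x. u \<le> cdf F x})"
    by (rule C.mono_I)
  fix u :: real assume u: "u \<in> {0<..<1}"
  have cdf_neg: "cdf F x = 0" if "x < 0" for x
  proof -
    have "emeasure F {..x} = emeasure F {}"
      by (rule emeasure_eq_AE) (use dist_familyD(2)[OF fam] that in \<open>auto elim!: eventually_mono\<close>)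
    then show ?thesis
      by (simp add: cdf_def measure_def)
  qed
  have "u \<le> cdf F (Inf {x. u \<le> cdf F x})"
    using C.pseudoinverse[of u "Inf {x. u \<le> cdf F x}"] u by auto
  then show "0 \<le> Inf {x. u \<le> cdf F x}"
    using cdf_neg[of "Inf {x. u \<le> cdf F x}"] u by force
qed

lemma Pn'_nonneg: "t \<in> {0..1} \<Longrightarrow> 0 \<le> Pn' n t"
  unfolding Pn'_def by (intro sum_nonneg) auto

lemma Pn'_le_Pn'_1: "t \<in> {0..1} \<Longrightarrow> Pn' n t \<le> Pn' n 1"
  unfolding Pn'_def by (intro sum_mono mult_left_mono) (auto intro!: power_le_one)

lemma Pn'_ge_1:
  assumes "1 \<le> n" "t \<in> {0..1}"
  shows "1 \<le> Pn' n t"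
proof -
  have "real 1 * t ^ (1 - 1) \<le> (\<Sum>i=1..n. real i * t ^ (i - 1))"
    by (rule member_le_sum) (use assms in auto)
  then show ?thesis
    by (simp add: Pn'_def)
qed

lemma borel_measurable_Pn'_Unif: "(\<lambda>u. Pn' n (1 - u)) \<in> borel_measurable Unif"
proof -
  have "(\<lambda>u. Pn' n (1 - u)) \<in> borel_measurable borel"
    by (rule borel_measurable_continuous_onI) (auto intro!: continuous_intros simp: Pn'_def)
  then show ?thesis
    by (intro measurable_restrict_space1) simp
qed

lemma nn_integral_Pn'_Unif:
  fixes h :: "real \<Rightarrow> real"
  assumes h: "mono_on {0..1} h" and h_nonneg: "\<And>u. u \<in> {0..1} \<Longrightarrow> 0 \<le> h u"
  shows "(\<integral>\<^sup>+u. ennreal (h u * Pn' n (1 - u)) \<partial>Unif) = ennreal (integral {0..1} (\<lambda>u. h u * Pn' n (1 - u)))"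
proof (rule nn_integral_Unif_eq_integral[where B="h 1 * Pn' n 1"])
  have "h \<in> borel_measurable Unif"
    by (rule borel_measurable_mono_on_Unif) (rule mono_on_subset[OF h], auto)
  then show "(\<lambda>u. h u * Pn' n (1 - u)) \<in> borel_measurable Unif"
    using borel_measurable_Pn'_Unif by (rule borel_measurable_times)
  fix u :: real assume u: "u \<in> {0<..<1}"
  have "0 \<le> Pn' n (1 - u)" "Pn' n (1 - u) \<le> Pn' n 1"
    using Pn'_nonneg[of "1 - u" n] Pn'_le_Pn'_1[of "1 - u" n] u by auto
  moreover have "0 \<le> h u" "h u \<le> h 1"
    using h_nonneg u mono_onD[OF h, of u 1] by auto
  ultimately show "0 \<le> h u * Pn' n (1 - u)" "\<bar>h u * Pn' n (1 - u)\<bar> \<le> h 1 * Pn' n 1"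
    by (auto simp: abs_mult intro: mult_mono)
qed


section \<open>Lower bound: feasible pairs bound every competitive ratio\<close>

text \<open>An arbitrary admissible algorithm need not have measurable decisions. On a
  finitely supported distribution we may replace it by one that first moves every price
  into the support: this changes nothing almost surely, and every function of finitely
  many values from a finite set is measurable.\<close>

definition snap_alg :: "real set \<Rightarrow> real \<Rightarrow> osdc_alg \<Rightarrow> osdc_alg" where
  "snap_alg S s0 A = (\<lambda>F n i xs l. A F n i (map (\<lambda>x. if x \<in> S then x else s0) xs) l)"

lemma osdc_cov_snap_alg:
  assumes "\<forall>j\<in>{1..n}. w j \<in> S"
  shows "i \<le> n \<Longrightarrow> osdc_cov (snap_alg S s0 A) F n w i = osdc_cov A F n w i"
proof (induction i)
  case 0
  then show ?case by simp
next
  case (Suc i)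
  have "map (\<lambda>x. if x \<in> S then x else s0) (map w [1..<Suc (Suc i)]) = map w [1..<Suc (Suc i)]"
    using assms Suc.prems by (auto simp: map_idI)
  then show ?case
    using Suc by (simp only: osdc_cov.simps snap_alg_def)
qed

lemma osdc_cost_snap_alg:
  assumes "\<forall>j\<in>{1..n}. w j \<in> S"
  shows "osdc_cost (snap_alg S s0 A) F n w = osdc_cost A F n w"
  unfolding osdc_cost_def
proof (intro sum.cong refl)
  fix j assume j: "j \<in> {1..n}"
  have "map (\<lambda>x. if x \<in> S then x else s0) (map w [1..<Suc j]) = map w [1..<Suc j]"
    using assms j by (auto simp: map_idI)
  moreover have "osdc_cov (snap_alg S s0 A) F n w (j - 1) = osdc_cov A F n w (j - 1)"
    using osdc_cov_snap_alg[OF assms] j by auto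
  ultimately show "real (osdc_T (snap_alg S s0 A) F n w j) * w j = real (osdc_T A F n w j) * w j"
    unfolding osdc_T_def by (simp only: snap_alg_def)
qed

lemma snap_alg_decisions_measurable:
  assumes S: "finite S" "s0 \<in> S"
  shows "decisions_measurable (snap_alg S s0 A) F n"
  unfolding decisions_measurable_def
proof (intro allI)
  fix i l
  let ?snap = "\<lambda>x::real. if x \<in> S then x else s0"
  let ?lists = "{ys. set ys \<subseteq> S \<and> length ys = i}"
  let ?g = "\<lambda>w::nat\<Rightarrow>real. map (\<lambda>j. ?snap (w j)) [1..<Suc i]"
  have finite_lists: "finite ?lists"
    using S by (simp add: finite_lists_length_eq)
  have "?g \<in> seq_space \<rightarrow>\<^sub>M count_space ?lists"
  proof (subst measurable_count_space_eq2[OF finite_lists], intro conjI ballI)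
    show "?g \<in> space seq_space \<rightarrow> ?lists"
      using S(2) by auto
    fix ys assume ys: "ys \<in> ?lists"
    have "?g w = ys \<longleftrightarrow> (\<forall>k\<in>{..<i}. ?snap (w (Suc k)) = ys ! k)" for w
      using ys by (simp del: upt_Suc add: list_eq_iff_nth_eq) blast
    then have "?g -` {ys} \<inter> space seq_space = {w \<in> space seq_space. \<forall>k\<in>{..<i}. ?snap (w (Suc k)) = ys ! k}"
      by blast
    also have "\<dots> \<in> sets seq_space"
      using S(1) by (simp add: finite_imp_closed) measurable
    finally show "?g -` {ys} \<inter> space seq_space \<in> sets seq_space" .
  qed
  then have "(\<lambda>w. (\<lambda>ys w. A F n i ys l) (?g w) w) \<in> seq_space \<rightarrow>\<^sub>M count_space UNIV"
    by (rule measurable_compose_countable'[rotated]) (auto intro: countable_finite finite_lists)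
  then show "(\<lambda>w. snap_alg S s0 A F n i (map w [1..<Suc i]) l) \<in> seq_space \<rightarrow>\<^sub>M count_space UNIV"
    by (simp del: upt_Suc add: snap_alg_def comp_def)
qed

lemma dp_value_le_ALG_finite_support:
  assumes fam: "F \<in> dist_family" and adm: "admissible n A" and S: "finite S" "s0 \<in> S"
    and supp: "AE x in F. x \<in> S"
  shows "ennreal (\<Sum>s=1..n. dp_val F s) \<le> ALG A n F"
proof -
  interpret F: real_distribution F
    using dist_familyD[OF fam] by simp
  have "covers_when_forced (snap_alg S s0 A) F n"
    using adm unfolding admissible_def covers_when_forced_def snap_alg_def by blast
  then have "ennreal (\<Sum>s=1..n. dp_val F s) \<le> ALG (snap_alg S s0 A) n F"
    by (rule dp_value_le_ALG[OF fam _ snap_alg_decisions_measurable[OF S]])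
  also have "ALG (snap_alg S s0 A) n F = ALG A n F"
    unfolding ALG_def
  proof (rule nn_integral_cong_AE)
    have "AE w in iid F n. \<forall>j\<in>{1..n}. w j \<in> S"
      unfolding iid_def
      by (intro eventually_ball_finite ballI AE_PiM_component) (auto simp: F.prob_space_axioms supp)
    then show "AE w in iid F n. ennreal (osdc_cost (snap_alg S s0 A) F n w) = ennreal (osdc_cost A F n w)"
      by eventually_elim (simp add: osdc_cost_snap_alg)
  qed
  finally show ?thesis .
qed

lemma integrable_on_subinterval_mono_on:
  fixes f :: "real \<Rightarrow> real"
  assumes "mono_on {0..1} f" "0 \<le> a" "b \<le> 1"
  shows "f integrable_on {a..b}"
  by (rule integrable_on_mono_on) (rule mono_on_subset[OF assms(1)], use assms in auto)

lemma mono_on_min_const: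
  fixes f :: "real \<Rightarrow> real"
  assumes "mono_on S f"
  shows "mono_on S (\<lambda>u. min (f u) c)"
  using mono_onD[OF assms] by (intro mono_onI) (simp add: min.coboundedI1)

lemma integral_min_le_threshold:
  fixes h :: "real \<Rightarrow> real"
  assumes h: "mono_on {0..1} h" and q: "q \<in> {0..1}"
  shows "integral {0..1} (\<lambda>u. min (h u) c) \<le> integral {0..q} h + (1 - q) * c"
proof -
  have "integral {0..1} (\<lambda>u. min (h u) c) = integral {0..q} (\<lambda>u. min (h u) c) + integral {q..1} (\<lambda>u. min (h u) c)"
    using q by (intro Henstock_Kurzweil_Integration.integral_combine[symmetric] integrable_on_subinterval_mono_on[OF mono_on_min_const[OF h]]) auto
  also have "\<dots> \<le> integral {0..q} h + integral {q..1} (\<lambda>u. c)"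
    using q by (intro add_mono integral_le integrable_on_subinterval_mono_on[OF mono_on_min_const[OF h]]
        integrable_on_subinterval_mono_on[OF h]) auto
  finally show ?thesis
    using q by simp
qed

lemma mono_on_threshold:
  fixes h :: "real \<Rightarrow> real"
  assumes h: "mono_on {0..1} h"
  obtains q where "q \<in> {0..1}" "\<And>u. u \<in> {0..1} \<Longrightarrow> u < q \<Longrightarrow> h u < c"
    "\<And>u. u \<in> {0..1} \<Longrightarrow> q < u \<Longrightarrow> c \<le> h u"
proof -
  define P where "P = {u\<in>{0..1}. h u < c}"
  define q where "q = (if P = {} then 0 else Sup P)"
  have bdd: "bdd_above P"
    unfolding P_def by (auto intro: bdd_aboveI[of _ 1])
  show ?thesis
  proof
    show "q \<in> {0..1}"
    proof (cases "P = {}")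
      case False
      then obtain x where "x \<in> P"
        by auto
      then show ?thesis
        using False cSup_upper[OF _ bdd, of x] cSup_least[OF False, of 1]
        by (auto simp: q_def P_def)
    qed (simp add: q_def)
    fix u :: real assume u: "u \<in> {0..1}"
    show "h u < c" if "u < q"
    proof -
      have "P \<noteq> {}" "u < Sup P"
        using that u by (auto simp: q_def split: if_splits)
      then obtain x where x: "x \<in> P" "u < x"
        using less_cSupE by blast
      then show ?thesis
        using u mono_onD[OF h, of u x] by (auto simp: P_def)
    qed
    show "c \<le> h u" if "q < u"
    proof (rule ccontr)
      assume "\<not> c \<le> h u"
      then have "u \<in> P"
        using u by (auto simp: P_def)
      then show False
        using that cSup_upper[OF _ bdd, of u] by (auto simp: q_def split: if_splits)
    qed
  qed
qed

text \<open>Minimising over \<open>q\<close>, the constraints of a feasible pair say exactly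
  \<open>d i \<le> \<integral>\<^sub>0\<^sup>1 min (h u) (d (i - 1)) du\<close>, the recursion of \<open>dp_val\<close>.\<close>

lemma integral_min_eq_threshold:
  fixes h :: "real \<Rightarrow> real"
  assumes h: "mono_on {0..1} h"
  obtains q where "q \<in> {0..1}" "integral {0..1} (\<lambda>u. min (h u) c) = integral {0..q} h + (1 - q) * c"
proof -
  obtain q where q: "q \<in> {0..1}" and below: "\<And>u. u \<in> {0..1} \<Longrightarrow> u < q \<Longrightarrow> h u < c"
    and above: "\<And>u. u \<in> {0..1} \<Longrightarrow> q < u \<Longrightarrow> c \<le> h u"
    using mono_on_threshold[OF h] by blast
  have "integral {0..1} (\<lambda>u. min (h u) c) = integral {0..q} (\<lambda>u. min (h u) c) + integral {q..1} (\<lambda>u. min (h u) c)"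
    using q by (intro Henstock_Kurzweil_Integration.integral_combine[symmetric]
        integrable_on_subinterval_mono_on[OF mono_on_min_const[OF h]]) auto
  also have "integral {0..q} (\<lambda>u. min (h u) c) = integral {0..q} h"
    by (rule integral_spike[of "{q}"]) (use below q in \<open>auto simp: less_imp_le\<close>)
  also have "integral {q..1} (\<lambda>u. min (h u) c) = integral {q..1} (\<lambda>u. c)"
    by (rule integral_spike[of "{q}"]) (use above q in auto)
  finally show ?thesis
    using q that by simp
qed

definition stair :: "(real \<Rightarrow> real) \<Rightarrow> nat \<Rightarrow> real \<Rightarrow> real" where
  "stair h m u = h (of_int \<lfloor>real m * u\<rfloor> / real m)"

lemma grid_floor_bounds:
  assumes m: "1 \<le> m" and u: "u \<in> {0..1}"
  shows "0 \<le> of_int \<lfloor>real m * u\<rfloor> / real m" "of_int \<lfloor>real m * u\<rfloor> / real m \<le> u"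
    "u - 1 / real m \<le> of_int \<lfloor>real m * u\<rfloor> / real m"
proof -
  have m_pos: "0 < real m"
    using m by simp
  show "0 \<le> of_int \<lfloor>real m * u\<rfloor> / real m"
    using u m_pos by auto
  have "of_int \<lfloor>real m * u\<rfloor> \<le> real m * u"
    by simp
  then show "of_int \<lfloor>real m * u\<rfloor> / real m \<le> u"
    using m_pos by (simp add: divide_le_eq mult.commute)
  have "real m * u - 1 \<le> of_int \<lfloor>real m * u\<rfloor>"
    by linarith
  then have "(real m * u - 1) / real m \<le> of_int \<lfloor>real m * u\<rfloor> / real m"
    using m_pos by (intro divide_right_mono) auto
  moreover have "(real m * u - 1) / real m = u - 1 / real m"
    using m_pos by (simp add: field_simps)
  ultimately show "u - 1 / real m \<le> of_int \<lfloor>real m * u\<rfloor> / real m"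
    by simp
qed

lemma grid_floor_in_unit:
  assumes "1 \<le> m" "u \<in> {0..1}"
  shows "of_int \<lfloor>real m * u\<rfloor> / real m \<in> {0..1}"
  using grid_floor_bounds[OF assms] assms(2) by auto

lemma mono_on_stair:
  assumes h: "mono_on {0..1} h" and m: "1 \<le> m"
  shows "mono_on {0..1} (stair h m)"
proof (rule mono_onI)
  fix u v :: real assume "u \<in> {0..1}" "v \<in> {0..1}" "u \<le> v"
  moreover have "of_int \<lfloor>real m * u\<rfloor> / real m \<le> of_int \<lfloor>real m * v\<rfloor> / real m"
    using m \<open>u \<le> v\<close> by (intro divide_right_mono) (auto intro!: floor_mono mult_left_mono)
  ultimately show "stair h m u \<le> stair h m v"
    unfolding stair_def using grid_floor_in_unit[OF m] by (intro mono_onD[OF h]) auto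
qed

lemma stair_bounds:
  assumes h: "mono_on {0..1} h" and m: "1 \<le> m" and u: "u \<in> {0..1}"
  shows "h 0 \<le> stair h m u" "stair h m u \<le> h u"
  unfolding stair_def using grid_floor_bounds[OF m u] u by (auto intro!: mono_onD[OF h])

lemma stair_in_grid_image:
  assumes u: "u \<in> {0<..<1}"
  shows "stair h m u \<in> (\<lambda>k. h (real k / real m)) ` {0..m}"
proof -
  have "0 \<le> \<lfloor>real m * u\<rfloor>" "\<lfloor>real m * u\<rfloor> \<le> int m"
    using u mult_left_le[of u "real m"] by (auto simp: floor_le_iff)
  then obtain k where "\<lfloor>real m * u\<rfloor> = int k" "k \<le> m"
    by (metis nonneg_int_cases of_nat_le_iff)
  then show ?thesis
    unfolding stair_def by (intro image_eqI[of _ _ k]) auto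
qed

lemma integral_shift_le_integral_stair:
  fixes h :: "real \<Rightarrow> real"
  assumes h: "mono_on {0..1} h" and m: "1 \<le> m"
  shows "integral {0..1 - 1 / real m} h \<le> integral {1 / real m..1} (stair h m)"
proof -
  define t where "t = 1 / real m"
  have t: "0 < t" "t \<le> 1"
    using m by (auto simp: t_def)
  have "integral {t..1} (\<lambda>u. h (u - t)) \<le> integral {t..1} (stair h m)"
  proof (rule integral_le)
    show "(\<lambda>u. h (u - t)) integrable_on {t..1}"
      using t by (intro integrable_on_mono_on mono_onI mono_onD[OF h]) auto
    show "stair h m integrable_on {t..1}"
      using t by (intro integrable_on_subinterval_mono_on[OF mono_on_stair[OF h m]]) auto
    fix u assume u: "u \<in> {t..1}"
    then have u01: "u \<in> {0..1}"
      using t by auto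
    show "h (u - t) \<le> stair h m u"
      unfolding stair_def
    proof (rule mono_onD[OF h])
      show "u - t \<in> {0..1}"
        using u t by auto
      show "of_int \<lfloor>real m * u\<rfloor> / real m \<in> {0..1}"
        by (rule grid_floor_in_unit[OF m u01])
      show "u - t \<le> of_int \<lfloor>real m * u\<rfloor> / real m"
        using grid_floor_bounds(3)[OF m u01] by (simp add: t_def)
    qed
  qed
  also have "integral {t..1} (\<lambda>u. h (u - t)) = integral {0..1 - t} h"
    using integral_shift_real_ivl[of 0 "-t" "1 - t" h] by simp
  finally show ?thesis
    by (simp add: t_def)
qed

lemma integral_stair_gap:
  fixes h :: "real \<Rightarrow> real"
  assumes h: "mono_on {0..1} h" and h_nonneg: "\<And>u. u \<in> {0..1} \<Longrightarrow> 0 \<le> h u" and m: "1 \<le> m"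
  shows "integral {0..1} h - integral {0..1} (stair h m) \<le> h 1 / real m"
proof -
  define t where "t = 1 / real m"
  have t: "0 < t" "t \<le> 1"
    using m by (auto simp: t_def)
  note stair_mono = mono_on_stair[OF h m]
  have "integral {0..1} (stair h m) = integral {0..t} (stair h m) + integral {t..1} (stair h m)"
    using t by (intro Henstock_Kurzweil_Integration.integral_combine[symmetric]
        integrable_on_subinterval_mono_on[OF stair_mono]) auto
  moreover have "0 \<le> integral {0..t} (stair h m)"
    using t h_nonneg[of 0] stair_bounds(1)[OF h m]
    by (intro integral_nonneg integrable_on_subinterval_mono_on[OF stair_mono]) force+
  ultimately have stair_tail: "integral {t..1} (stair h m) \<le> integral {0..1} (stair h m)"
    by simp
  have "integral {0..1} h = integral {0..1 - t} h + integral {1 - t..1} h"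
    using t by (intro Henstock_Kurzweil_Integration.integral_combine[symmetric]
        integrable_on_subinterval_mono_on[OF h]) auto
  also have "integral {1 - t..1} h \<le> integral {1 - t..1} (\<lambda>u. h 1)"
    using t by (intro integral_le integrable_on_subinterval_mono_on[OF h]) (auto intro: mono_onD[OF h])
  finally have "integral {0..1} h \<le> integral {0..1 - t} h + t * h 1"
    using t by simp
  then show ?thesis
    using stair_tail integral_shift_le_integral_stair[OF h m] by (simp add: t_def)
qed

lemma integral_min_le_add_gap:
  fixes g h :: "real \<Rightarrow> real"
  assumes g: "mono_on {0..1} g" and h: "mono_on {0..1} h" and le: "\<And>u. u \<in> {0..1} \<Longrightarrow> g u \<le> h u"
  shows "integral {0..1} (\<lambda>u. min (h u) c)
    \<le> integral {0..1} (\<lambda>u. min (g u) c) + (integral {0..1} h - integral {0..1} g)"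
proof -
  have int: "(\<lambda>u. min (g u) c) integrable_on {0..1}" "(\<lambda>u. min (h u) c) integrable_on {0..1}"
    "g integrable_on {0..1}" "h integrable_on {0..1}"
    using g h by (auto intro!: integrable_on_mono_on mono_on_min_const)
  have "min (h u) c \<le> min (g u) c + (h u - g u)" if "u \<in> {0..1}" for u
    using le[OF that] by (simp add: min_def)
  then have "integral {0..1} (\<lambda>u. min (h u) c) \<le> integral {0..1} (\<lambda>u. min (g u) c + (h u - g u))"
    using int by (intro integral_le integrable_add integrable_diff) auto
  also have "\<dots> = integral {0..1} (\<lambda>u. min (g u) c) + (integral {0..1} h - integral {0..1} g)"
    using int by (simp add: integral_add integral_diff integrable_diff)
  finally show ?thesis .
qed

lemma integral_min_le_shift:
  fixes h :: "real \<Rightarrow> real"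
  assumes h: "mono_on {0..1} h" and "a \<le> c + \<delta>" "0 \<le> \<delta>"
  shows "integral {0..1} (\<lambda>u. min (h u) a) \<le> integral {0..1} (\<lambda>u. min (h u) c) + \<delta>"
proof -
  have int: "(\<lambda>u. min (h u) a) integrable_on {0..1}" "(\<lambda>u. min (h u) c) integrable_on {0..1}"
    using h by (auto intro!: integrable_on_mono_on mono_on_min_const)
  have "integral {0..1} (\<lambda>u. min (h u) a) \<le> integral {0..1} (\<lambda>u. min (h u) c + \<delta>)"
    using int assms by (intro integral_le integrable_add) (auto simp: min_def)
  also have "\<dots> = integral {0..1} (\<lambda>u. min (h u) c) + \<delta>"
    using integral_add[OF int(2) integrable_const_ivl[of \<delta> 0 1]] by simp
  finally show ?thesis .
qed

lemma feasibleD: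
  assumes "(d, h) \<in> feasible n"
  shows "\<And>i. i \<in> {1..n} \<Longrightarrow> 0 \<le> d i" "\<And>u. u \<in> {0..1} \<Longrightarrow> 0 \<le> h u" "mono_on {0..1} h"
    "d 1 \<le> integral {0..1} h"
    "\<And>i q. i \<in> {2..n} \<Longrightarrow> q \<in> {0..1} \<Longrightarrow> d i \<le> integral {0..q} h + (1 - q) * d (i - 1)"
    "integral {0..1} (\<lambda>u. h u * Pn' n (1 - u)) = 1"
  using assms unfolding feasible_def by auto

lemma stair_bounded:
  assumes h: "mono_on {0..1} h" and h_nonneg: "\<And>u. u \<in> {0..1} \<Longrightarrow> 0 \<le> h u"
    and m: "1 \<le> m" and u: "u \<in> {0..1}"
  shows "0 \<le> stair h m u" "\<bar>stair h m u\<bar> \<le> h 1"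
  using stair_bounds[OF h m u] h_nonneg[of 0] mono_onD[OF h, of u 1] u by auto

lemma trunc_mean_distr_Unif:
  fixes g :: "real \<Rightarrow> real"
  assumes g: "mono_on {0<..<1} g" and b: "\<And>u. u \<in> {0<..<1} \<Longrightarrow> \<bar>g u\<bar> \<le> B"
  shows "trunc_mean (distr Unif borel g) c = integral {0..1} (\<lambda>u. min (g u) c)"
  unfolding trunc_mean_def
  by (rule integral_distr_Unif[OF g, where B="B + \<bar>c\<bar>"]) (use b in \<open>force+\<close>)

lemma mean_distr_Unif:
  fixes g :: "real \<Rightarrow> real"
  assumes g: "mono_on {0<..<1} g" and b: "\<And>u. u \<in> {0<..<1} \<Longrightarrow> \<bar>g u\<bar> \<le> B"
  shows "(\<integral>x. x \<partial>distr Unif borel g) = integral {0..1} g"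
  using integral_distr_Unif[OF g, of "\<lambda>x. x" B] b by simp

lemma dp_val_distr_stair_ge:
  assumes feas: "(d, h) \<in> feasible n" and m: "1 \<le> m"
  shows "1 \<le> j \<Longrightarrow> j \<le> n \<Longrightarrow> d j - real j * (h 1 / real m) \<le> dp_val (distr Unif borel (stair h m)) j"
proof (induction j rule: dec_induct)
  let ?g = "stair h m" and ?F = "distr Unif borel (stair h m)" and ?e = "h 1 / real m"
  note h = feasibleD(3)[OF feas] and h_nonneg = feasibleD(2)[OF feas]
  have g: "mono_on {0..1} ?g"
    by (rule mono_on_stair[OF h m])
  have g': "mono_on {0<..<1} ?g"
    by (rule mono_on_subset[OF g]) auto
  have bound: "\<bar>?g u\<bar> \<le> h 1" if "u \<in> {0<..<1}" for u
    using that stair_bounded[OF h h_nonneg m] by auto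
  have g_le_h: "?g u \<le> h u" if "u \<in> {0..1}" for u
    by (rule stair_bounds(2)[OF h m that])
  have gap: "integral {0..1} h - integral {0..1} ?g \<le> ?e"
    by (rule integral_stair_gap[OF h h_nonneg m])
  {
    case base
    show ?case
      using feasibleD(4)[OF feas] gap mean_distr_Unif[OF g' bound] by simp
  next
    case (step j)
    define D where "D = dp_val ?F j"
    have e_nonneg: "0 \<le> real j * ?e"
      using h_nonneg[of 1] by simp
    have "dp_val ?F (Suc j) = integral {0..1} (\<lambda>u. min (?g u) D)"
      using step(1) trunc_mean_distr_Unif[OF g' bound] by (cases j) (auto simp: D_def)
    moreover have "integral {0..1} (\<lambda>u. min (h u) D) \<le> integral {0..1} (\<lambda>u. min (?g u) D) + ?e"
      using integral_min_le_add_gap[OF g h g_le_h, of D] gap by linarith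
    moreover have "integral {0..1} (\<lambda>u. min (h u) (d j)) \<le> integral {0..1} (\<lambda>u. min (h u) D) + real j * ?e"
      using step e_nonneg by (intro integral_min_le_shift[OF h]) (auto simp: D_def)
    moreover obtain q where "q \<in> {0..1}"
      "integral {0..1} (\<lambda>u. min (h u) (d j)) = integral {0..q} h + (1 - q) * d j"
      by (rule integral_min_eq_threshold[OF h])
    then have "d (Suc j) \<le> integral {0..1} (\<lambda>u. min (h u) (d j))"
      using feasibleD(5)[OF feas, of "Suc j" q] step by auto
    ultimately have "d (Suc j) \<le> dp_val ?F (Suc j) + (?e + real j * ?e)"
      by linarith
    then show ?case
      by (simp add: algebra_simps add_divide_distrib)
  }
qed

lemma distr_stair_in_dist_family:
  assumes feas: "(d, h) \<in> feasible n" and m: "1 \<le> m"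
  shows "distr Unif borel (stair h m) \<in> dist_family"
proof -
  note h = feasibleD(3)[OF feas] and h_nonneg = feasibleD(2)[OF feas]
  have g': "mono_on {0<..<1} (stair h m)"
    by (rule mono_on_subset[OF mono_on_stair[OF h m]]) auto
  show ?thesis
    using stair_bounded[OF h h_nonneg m]
    by (intro distr_Unif_in_dist_family[OF g']
        integrable_Unif_bounded[OF borel_measurable_mono_on_Unif[OF g'], where B="h 1"]) auto
qed

lemma OPT_distr_stair_le_1:
  assumes feas: "(d, h) \<in> feasible n" and m: "1 \<le> m"
  shows "OPT n (distr Unif borel (stair h m)) \<le> 1"
proof -
  note h = feasibleD(3)[OF feas] and h_nonneg = feasibleD(2)[OF feas]
  have g': "mono_on {0<..<1} (stair h m)"
    by (rule mono_on_subset[OF mono_on_stair[OF h m]]) auto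
  have "OPT n (distr Unif borel (stair h m)) = (\<integral>\<^sup>+u. ennreal (stair h m u * Pn' n (1 - u)) \<partial>Unif)"
    using stair_bounded[OF h h_nonneg m] by (intro OPT_distr_Unif[OF g']) auto
  also have "\<dots> \<le> (\<integral>\<^sup>+u. ennreal (h u * Pn' n (1 - u)) \<partial>Unif)"
    using stair_bounds(2)[OF h m] Pn'_nonneg
    by (intro nn_integral_mono ennreal_leI mult_right_mono) (auto simp: space_Unif)
  also have "\<dots> = 1"
    using nn_integral_Pn'_Unif[OF h h_nonneg] feasibleD(6)[OF feas] by simp
  finally show ?thesis .
qed

lemma ennreal_le_divide_le_1:
  fixes x y :: ennreal
  assumes "y \<le> 1"
  shows "x \<le> x / y"
proof (cases "y = 0")
  case True
  then show ?thesis
    by (cases "x = 0") (simp_all add: divide_ennreal_def)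
next
  case False
  have "y \<noteq> \<top>"
    using assms by (auto simp: top_unique)
  then have "x = x / y * y"
    using False by (simp add: ennreal_divide_times ennreal_divide_self less_top)
  also have "\<dots> \<le> x / y"
    using assms by (metis mult.right_neutral mult_left_mono zero_le)
  finally show ?thesis .
qed

lemma feasible_le_ratio_D_approx:
  assumes feas: "(d, h) \<in> feasible n" and adm: "admissible n A" and m: "1 \<le> m"
  shows "ennreal ((\<Sum>i=1..n. d i) - real n * real n * (h 1 / real m)) \<le> ratio_D n A"
proof -
  let ?F = "distr Unif borel (stair h m)" and ?e = "h 1 / real m"
  have fam: "?F \<in> dist_family"
    by (rule distr_stair_in_dist_family[OF feas m])
  have "mono_on {0<..<1} (stair h m)"
    by (rule mono_on_subset[OF mono_on_stair[OF feasibleD(3)[OF feas] m]]) auto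
  then have "AE x in ?F. x \<in> (\<lambda>k. h (real k / real m)) ` {0..m}"
    by (subst AE_distr_iff[OF borel_measurable_mono_on_Unif])
       (auto simp: finite_imp_closed space_Unif stair_in_grid_image intro!: AE_I2)
  then have ALG_ge: "ennreal (\<Sum>s=1..n. dp_val ?F s) \<le> ALG A n ?F"
    by (rule dp_value_le_ALG_finite_support[OF fam adm, rotated 2]) auto
  have "(\<Sum>j=1..n. real j * ?e) \<le> (\<Sum>j=1..n. real n * ?e)"
    using feasibleD(2)[OF feas, of 1] by (intro sum_mono mult_right_mono) auto
  moreover have "(\<Sum>j=1..n. d j - real j * ?e) \<le> (\<Sum>j=1..n. dp_val ?F j)"
    by (intro sum_mono) (use dp_val_distr_stair_ge[OF feas m] in auto)
  ultimately have "(\<Sum>i=1..n. d i) - real n * real n * ?e \<le> (\<Sum>j=1..n. dp_val ?F j)"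
    by (simp add: sum_subtractf)
  then have "ennreal ((\<Sum>i=1..n. d i) - real n * real n * ?e) \<le> ALG A n ?F"
    using ALG_ge ennreal_leI order.trans by blast
  also have "\<dots> \<le> ALG A n ?F / OPT n ?F"
    by (rule ennreal_le_divide_le_1[OF OPT_distr_stair_le_1[OF feas m]])
  also have "\<dots> \<le> ratio_D n A"
    unfolding ratio_D_def by (rule SUP_upper[OF fam])
  finally show ?thesis .
qed

lemma feasible_le_ratio_D:
  assumes feas: "(d, h) \<in> feasible n" and adm: "admissible n A"
  shows "ennreal (\<Sum>i=1..n. d i) \<le> ratio_D n A"
proof (rule ennreal_le_epsilon)
  fix \<epsilon> :: real assume \<epsilon>: "0 < \<epsilon>"
  define K where "K = real n * real n * h 1"
  define m where "m = nat \<lceil>K / \<epsilon>\<rceil> + 1"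
  have m: "1 \<le> m" "K / \<epsilon> \<le> real m"
    unfolding m_def by linarith+
  then have "K / real m \<le> \<epsilon>"
    using \<epsilon> by (simp add: divide_le_eq mult.commute)
  then have "ennreal (\<Sum>i=1..n. d i) \<le> ennreal ((\<Sum>i=1..n. d i) - real n * real n * (h 1 / real m) + \<epsilon>)"
    unfolding K_def by (intro ennreal_leI) simp
  also have "\<dots> \<le> ennreal ((\<Sum>i=1..n. d i) - real n * real n * (h 1 / real m)) + ennreal \<epsilon>"
    using \<epsilon> by (cases "0 \<le> (\<Sum>i=1..n. d i) - real n * real n * (h 1 / real m)")
      (auto simp: ennreal_plus ennreal_neg intro: ennreal_leI)
  also have "\<dots> \<le> ratio_D n A + ennreal \<epsilon>"
    by (intro add_right_mono feasible_le_ratio_D_approx[OF feas adm m(1)])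
  finally show "ennreal (\<Sum>i=1..n. d i) \<le> ratio_D n A + ennreal \<epsilon>" .
qed


section \<open>Upper bound: the dynamic-programming ratio is attained by feasible pairs\<close>

text \<open>The values \<open>dp_val\<close> of the truncated price \<open>min X M\<close>.\<close>

fun dp_val_trunc :: "real measure \<Rightarrow> real \<Rightarrow> nat \<Rightarrow> real" where
  "dp_val_trunc F M 0 = 0"
| "dp_val_trunc F M (Suc 0) = trunc_mean F M"
| "dp_val_trunc F M (Suc (Suc j)) = trunc_mean F (dp_val_trunc F M (Suc j))"

lemma trunc_mean_le:
  assumes fam: "F \<in> dist_family" and "0 \<le> c"
  shows "trunc_mean F c \<le> c"
proof -
  interpret real_distribution F
    using dist_familyD[OF fam] by simp
  show ?thesis
    unfolding trunc_mean_def by (rule integral_le_const) (auto intro: integrable_min_const[OF fam])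
qed

lemma trunc_mean_le_add:
  assumes fam: "F \<in> dist_family" and "b \<le> a"
  shows "trunc_mean F a \<le> trunc_mean F b + (a - b)"
proof -
  interpret real_distribution F
    using dist_familyD[OF fam] by simp
  have "trunc_mean F a \<le> (\<integral>x. min x b + (a - b) \<partial>F)"
    unfolding trunc_mean_def using assms
    by (intro integral_mono integrable_min_const[OF fam] Bochner_Integration.integrable_add) (auto simp: min_def)
  also have "\<dots> = trunc_mean F b + (a - b)"
    unfolding trunc_mean_def using prob_space
    by (subst Bochner_Integration.integral_add) (auto intro: integrable_min_const[OF fam])
  finally show ?thesis .
qed

lemma dp_val_trunc_bounds:
  assumes fam: "F \<in> dist_family" and M: "0 \<le> M" and "1 \<le> j"
  shows "0 \<le> dp_val_trunc F M j \<and> dp_val_trunc F M j \<le> M"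
  using assms(3)
proof (induction j rule: dec_induct)
  case base
  then show ?case using trunc_mean_nonneg[OF fam M] trunc_mean_le[OF fam M] by simp
next
  case (step j)
  then obtain j' where "j = Suc j'"
    by (cases j) auto
  then show ?case
    using step trunc_mean_nonneg[OF fam] trunc_mean_le[OF fam] by fastforce
qed

text \<open>\<open>trunc_mean F\<close> is monotone and \<open>1\<close>-Lipschitz, so the truncation loss does not grow
  along the recursion.\<close>

lemma dp_val_le_dp_val_trunc:
  assumes fam: "F \<in> dist_family" and "1 \<le> j"
  shows "dp_val F j - (dp_val F 1 - trunc_mean F M) \<le> dp_val_trunc F M j"
  using assms(2)
proof (induction j rule: dec_induct)
  case base
  then show ?case by simp
next
  case (step j)
  then obtain j' where j: "j = Suc j'"
    by (cases j) auto
  have loss_nonneg: "0 \<le> dp_val F 1 - trunc_mean F M"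
    using trunc_mean_le_mean[OF fam, of M] by simp
  have "trunc_mean F (dp_val F j) - (dp_val F 1 - trunc_mean F M) \<le> trunc_mean F (dp_val_trunc F M j)"
  proof (cases "dp_val F j \<le> dp_val_trunc F M j")
    case True
    then show ?thesis
      using trunc_mean_mono[OF fam True] loss_nonneg by simp
  next
    case False
    then show ?thesis
      using trunc_mean_le_add[OF fam, of "dp_val_trunc F M j" "dp_val F j"] step.IH by simp
  qed
  then show ?case
    using j by simp
qed

lemma trunc_mean_tendsto_mean:
  assumes fam: "F \<in> dist_family"
  shows "(\<lambda>k::nat. trunc_mean F (real k)) \<longlonglongrightarrow> dp_val F 1"
proof -
  interpret real_distribution F
    using dist_familyD[OF fam] by simp
  have "(\<lambda>k::nat. \<integral>x. min x (real k) \<partial>F) \<longlonglongrightarrow> (\<integral>x. x \<partial>F)"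
  proof (rule integral_dominated_convergence[where w="\<lambda>x. \<bar>x\<bar>"])
    show "integrable F (\<lambda>x. \<bar>x\<bar>)"
      using dist_familyD(3)[OF fam] by simp
    show "AE x in F. (\<lambda>k. min x (real k)) \<longlonglongrightarrow> x"
    proof (intro AE_I2 tendsto_eventually)
      fix x :: real
      show "eventually (\<lambda>k. min x (real k) = x) sequentially"
        using eventually_ge_at_top[of "nat \<lceil>x\<rceil>"] by eventually_elim linarith
    qed
    show "AE x in F. norm (min x (real k)) \<le> \<bar>x\<bar>" for k
      using dist_familyD(2)[OF fam] by eventually_elim auto
  qed auto
  then show ?thesis
    by (simp add: trunc_mean_def)
qed

text \<open>The quantile function of \<open>min X M\<close>, extended monotonically to the endpoints.\<close>

definition trunc_quantile :: "real measure \<Rightarrow> real \<Rightarrow> real \<Rightarrow> real" where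
  "trunc_quantile F M u = (if u \<le> 0 then 0 else if 1 \<le> u then M else min (Inf {x. u \<le> cdf F x}) M)"

lemma trunc_quantile_bounds:
  assumes fam: "F \<in> dist_family" and "0 \<le> M" "u \<in> {0..1}"
  shows "0 \<le> trunc_quantile F M u" "trunc_quantile F M u \<le> M"
  using quantile_representation(3)[OF fam] assms by (auto simp: trunc_quantile_def)

lemma mono_on_trunc_quantile:
  assumes fam: "F \<in> dist_family" and M: "0 \<le> M"
  shows "mono_on {0..1} (trunc_quantile F M)"
proof (rule mono_onI)
  fix r s :: real assume r: "r \<in> {0..1}" and s: "s \<in> {0..1}" and "r \<le> s"
  show "trunc_quantile F M r \<le> trunc_quantile F M s"
  proof (cases "r \<le> 0 \<or> 1 \<le> s")
    case True
    then show ?thesis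
      using trunc_quantile_bounds[OF fam M r] trunc_quantile_bounds[OF fam M s] r s \<open>r \<le> s\<close>
      by (auto simp: trunc_quantile_def)
  next
    case False
    then have "r \<in> {0<..<1}" "s \<in> {0<..<1}"
      using r s \<open>r \<le> s\<close> by auto
    then show ?thesis
      using mono_onD[OF quantile_representation(2)[OF fam] _ _ \<open>r \<le> s\<close>]
      by (auto simp: trunc_quantile_def intro: min.mono)
  qed
qed

lemma integral_min_trunc_quantile:
  assumes fam: "F \<in> dist_family" and c: "0 \<le> c" "c \<le> M"
  shows "integral {0..1} (\<lambda>u. min (trunc_quantile F M u) c) = trunc_mean F c"
proof -
  let ?Q = "\<lambda>u. Inf {x. u \<le> cdf F x}"
  have "trunc_mean F c = integral\<^sup>L (distr Unif borel ?Q) (\<lambda>x. min x c)"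
    unfolding trunc_mean_def quantile_representation(1)[OF fam] ..
  also have "\<dots> = integral {0..1} (\<lambda>u. min (?Q u) c)"
    using quantile_representation(3)[OF fam] c
    by (intro integral_distr_Unif[OF quantile_representation(2)[OF fam], where B=c]) auto
  also have "\<dots> = integral {0..1} (\<lambda>u. min (trunc_quantile F M u) c)"
    using c by (intro integral_spike[of "{0,1}"]) (auto simp: trunc_quantile_def min_def)
  finally show ?thesis ..
qed

lemma integral_trunc_quantile:
  assumes fam: "F \<in> dist_family" and M: "0 \<le> M"
  shows "integral {0..1} (trunc_quantile F M) = trunc_mean F M"
proof -
  have "integral {0..1} (trunc_quantile F M) = integral {0..1} (\<lambda>u. min (trunc_quantile F M u) M)"
    using trunc_quantile_bounds[OF fam M] by (intro integral_cong) auto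
  then show ?thesis
    using integral_min_trunc_quantile[OF fam M order.refl] by simp
qed

lemma dp_val_trunc_le_threshold:
  assumes fam: "F \<in> dist_family" and M: "0 \<le> M" and i: "2 \<le> i" and q: "q \<in> {0..1}"
  shows "dp_val_trunc F M i \<le> integral {0..q} (trunc_quantile F M) + (1 - q) * dp_val_trunc F M (i - 1)"
proof -
  obtain j where j: "i = Suc (Suc j)"
    using i by (metis add_2_eq_Suc le_Suc_ex)
  then have "dp_val_trunc F M i = trunc_mean F (dp_val_trunc F M (i - 1))"
    by simp
  also have "\<dots> = integral {0..1} (\<lambda>u. min (trunc_quantile F M u) (dp_val_trunc F M (i - 1)))"
    using dp_val_trunc_bounds[OF fam M, of "i - 1"] i by (intro integral_min_trunc_quantile[OF fam, symmetric]) auto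
  also have "\<dots> \<le> integral {0..q} (trunc_quantile F M) + (1 - q) * dp_val_trunc F M (i - 1)"
    by (rule integral_min_le_threshold[OF mono_on_trunc_quantile[OF fam M] q])
  finally show ?thesis .
qed

lemma OPT_ge_trunc_quantile:
  assumes fam: "F \<in> dist_family" and M: "0 \<le> M"
  shows "ennreal (integral {0..1} (\<lambda>u. trunc_quantile F M u * Pn' n (1 - u))) \<le> OPT n F"
proof -
  let ?Q = "\<lambda>u. Inf {x. u \<le> cdf F x}"
  have "ennreal (integral {0..1} (\<lambda>u. trunc_quantile F M u * Pn' n (1 - u)))
      = (\<integral>\<^sup>+u. ennreal (trunc_quantile F M u * Pn' n (1 - u)) \<partial>Unif)"
    using trunc_quantile_bounds(1)[OF fam M]
    by (intro nn_integral_Pn'_Unif[symmetric] mono_on_trunc_quantile[OF fam M])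
  also have "\<dots> \<le> (\<integral>\<^sup>+u. ennreal (?Q u * Pn' n (1 - u)) \<partial>Unif)"
    using Pn'_nonneg
    by (intro nn_integral_mono ennreal_leI mult_right_mono) (auto simp: space_Unif trunc_quantile_def)
  also have "\<dots> = OPT n F"
    using OPT_distr_Unif[OF quantile_representation(2,3)[OF fam], of n]
    by (simp add: quantile_representation(1)[OF fam])
  finally show ?thesis .
qed

lemma trunc_mean_le_integral_trunc_quantile_Pn':
  assumes n: "1 \<le> n" and fam: "F \<in> dist_family" and M: "0 \<le> M"
  shows "trunc_mean F M \<le> integral {0..1} (\<lambda>u. trunc_quantile F M u * Pn' n (1 - u))"
proof -
  note Q = mono_on_trunc_quantile[OF fam M]
  have "(\<lambda>u. trunc_quantile F M u * Pn' n (1 - u)) integrable_on {0..1}"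
  proof (rule integrable_on_Unif_bounded[where B="M * Pn' n 1"])
    have "mono_on {0<..<1} (trunc_quantile F M)"
      by (rule mono_on_subset[OF Q]) auto
    then show "(\<lambda>u. trunc_quantile F M u * Pn' n (1 - u)) \<in> borel_measurable Unif"
      by (intro borel_measurable_times borel_measurable_mono_on_Unif borel_measurable_Pn'_Unif)
    fix u :: real assume "u \<in> {0<..<1}"
    then show "\<bar>trunc_quantile F M u * Pn' n (1 - u)\<bar> \<le> M * Pn' n 1"
      using trunc_quantile_bounds[OF fam M, of u] Pn'_nonneg[of "1 - u" n] Pn'_le_Pn'_1[of "1 - u" n]
      by (auto simp: abs_mult intro: mult_mono)
  qed
  moreover have "trunc_quantile F M u \<le> trunc_quantile F M u * Pn' n (1 - u)" if "u \<in> {0..1}" for u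
    using Pn'_ge_1[OF n, of "1 - u"] trunc_quantile_bounds(1)[OF fam M that] that
    by (simp add: mult_le_cancel_left1)
  ultimately have "integral {0..1} (trunc_quantile F M) \<le> integral {0..1} (\<lambda>u. trunc_quantile F M u * Pn' n (1 - u))"
    by (intro integral_le integrable_on_mono_on[OF Q])
  then show ?thesis
    by (simp add: integral_trunc_quantile[OF fam M])
qed

lemma scaled_trunc_quantile_feasible:
  assumes fam: "F \<in> dist_family" and M: "0 \<le> M" and Z: "0 < Z"
    and Z_def: "Z = integral {0..1} (\<lambda>u. trunc_quantile F M u * Pn' n (1 - u))"
  shows "(\<lambda>j. dp_val_trunc F M j / Z, \<lambda>u. trunc_quantile F M u / Z) \<in> feasible n"
  unfolding feasible_def
proof (intro CollectI case_prodI conjI ballI)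
  note Q = mono_on_trunc_quantile[OF fam M]
  show "0 \<le> dp_val_trunc F M i / Z" if "i \<in> {1..n}" for i
    using dp_val_trunc_bounds[OF fam M, of i] that Z by auto
  show "0 \<le> trunc_quantile F M u / Z" if "u \<in> {0..1}" for u
    using trunc_quantile_bounds[OF fam M that] Z by auto
  show mono: "mono_on {0..1} (\<lambda>u. trunc_quantile F M u / Z)"
    using Z mono_onD[OF Q] by (intro mono_onI divide_right_mono) auto
  then show "(\<lambda>u. trunc_quantile F M u / Z) integrable_on {0..1}"
    by (rule integrable_on_mono_on)
  show "dp_val_trunc F M 1 / Z \<le> integral {0..1} (\<lambda>u. trunc_quantile F M u / Z)"
    by (simp add: integral_divide integral_trunc_quantile[OF fam M])
  show "integral {0..1} (\<lambda>u. trunc_quantile F M u / Z * Pn' n (1 - u)) = 1"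
    using integral_divide[of "{0..1}" "\<lambda>u. trunc_quantile F M u * Pn' n (1 - u)" Z] Z
    by (simp add: Z_def[symmetric])
  fix i and q :: real assume i: "i \<in> {2..n}" and q: "q \<in> {0..1}"
  have "dp_val_trunc F M i / Z \<le> (integral {0..q} (trunc_quantile F M) + (1 - q) * dp_val_trunc F M (i - 1)) / Z"
    using dp_val_trunc_le_threshold[OF fam M _ q, of i] i Z by (simp add: divide_right_mono)
  then show "dp_val_trunc F M i / Z \<le> integral {0..q} (\<lambda>u. trunc_quantile F M u / Z) + (1 - q) * (dp_val_trunc F M (i - 1) / Z)"
    by (simp add: integral_divide add_divide_distrib)
qed

lemma ennreal_divide_le_divide_lower_bound:
  assumes "0 \<le> x" "0 < b" "ennreal b \<le> A"
  shows "ennreal x / A \<le> ennreal (x / b)"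
proof (cases A)
  case (real a)
  then have "b \<le> a" "0 < a"
    using assms by (auto simp: ennreal_le_iff2 ennreal_le_iff)
  then show ?thesis
    using real assms by (simp add: divide_ennreal frac_le ennreal_leI)
qed simp

lemma dp_ratio_le_feasible_plus_loss:
  assumes n: "1 \<le> n" and fam: "F \<in> dist_family" and M: "0 \<le> M" and pos: "0 < trunc_mean F M"
  shows "ennreal (\<Sum>s=1..n. dp_val F s) / OPT n F
    \<le> (SUP p\<in>feasible n. ennreal (\<Sum>i=1..n. fst p i))
      + ennreal (real n * (dp_val F 1 - trunc_mean F M) / trunc_mean F M)"
proof -
  define Z where "Z = integral {0..1} (\<lambda>u. trunc_quantile F M u * Pn' n (1 - u))"
  define \<delta> where "\<delta> = dp_val F 1 - trunc_mean F M"
  have Z: "trunc_mean F M \<le> Z" "0 < Z"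
    using trunc_mean_le_integral_trunc_quantile_Pn'[OF n fam M] pos unfolding Z_def by auto
  have \<delta>: "0 \<le> \<delta>"
    using trunc_mean_le_mean[OF fam, of M] unfolding \<delta>_def by simp
  have trunc_nonneg: "0 \<le> (\<Sum>j=1..n. dp_val_trunc F M j)"
    using dp_val_trunc_bounds[OF fam M] by (auto intro: sum_nonneg)
  have "(\<Sum>s=1..n. dp_val F s) \<le> (\<Sum>j=1..n. dp_val_trunc F M j + \<delta>)"
  proof (intro sum_mono)
    fix s assume "s \<in> {1..n}"
    then show "dp_val F s \<le> dp_val_trunc F M s + \<delta>"
      using dp_val_le_dp_val_trunc[OF fam, of s M] unfolding \<delta>_def by simp
  qed
  also have "\<dots> = (\<Sum>j=1..n. dp_val_trunc F M j) + real n * \<delta>"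
    by (simp add: sum.distrib)
  finally have "(\<Sum>s=1..n. dp_val F s) / Z \<le> (\<Sum>j=1..n. dp_val_trunc F M j) / Z + real n * \<delta> / Z"
    using Z by (simp add: divide_right_mono add_divide_distrib[symmetric])
  also have "real n * \<delta> / Z \<le> real n * \<delta> / trunc_mean F M"
    using Z pos \<delta> by (intro frac_le) auto
  finally have ratio_le: "(\<Sum>s=1..n. dp_val F s) / Z
      \<le> (\<Sum>j=1..n. dp_val_trunc F M j) / Z + real n * \<delta> / trunc_mean F M"
    by simp
  have "ennreal (\<Sum>s=1..n. dp_val F s) / OPT n F \<le> ennreal ((\<Sum>s=1..n. dp_val F s) / Z)"
    using OPT_ge_trunc_quantile[OF fam M, of n] dp_val_nonneg[OF fam] Z unfolding Z_def
    by (intro ennreal_divide_le_divide_lower_bound sum_nonneg) auto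
  also have "\<dots> \<le> ennreal ((\<Sum>j=1..n. dp_val_trunc F M j) / Z + real n * \<delta> / trunc_mean F M)"
    using ratio_le by (rule ennreal_leI)
  also have "\<dots> = ennreal ((\<Sum>j=1..n. dp_val_trunc F M j) / Z) + ennreal (real n * \<delta> / trunc_mean F M)"
    using Z pos \<delta> trunc_nonneg by (intro ennreal_plus) auto
  also have "\<dots> \<le> (SUP p\<in>feasible n. ennreal (\<Sum>i=1..n. fst p i)) + ennreal (real n * \<delta> / trunc_mean F M)"
    using SUP_upper[OF scaled_trunc_quantile_feasible[OF fam M Z(2) Z_def], of "\<lambda>p. ennreal (\<Sum>i=1..n. fst p i)"]
    by (intro add_right_mono) (simp add: sum_divide_distrib)
  finally show ?thesis
    unfolding \<delta>_def .
qed

text \<open>Letting \<open>M \<rightarrow> \<infinity>\<close> removes the truncation loss.\<close>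

lemma dp_ratio_le_feasible:
  assumes n: "1 \<le> n" and fam: "F \<in> dist_family"
  shows "ennreal (\<Sum>s=1..n. dp_val F s) / OPT n F \<le> (SUP p\<in>feasible n. ennreal (\<Sum>i=1..n. fst p i))"
proof (cases "dp_val F 1 = 0")
  case True
  then have "\<forall>s\<in>{1..n}. dp_val F s = 0"
    using dp_val_nonneg[OF fam] dp_val_le_mean[OF fam] by (auto intro: antisym)
  then show ?thesis by simp
next
  case False
  then have \<mu>: "0 < dp_val F 1"
    using dp_val_nonneg[OF fam, of 1] by linarith
  note mean_lim = trunc_mean_tendsto_mean[OF fam]
  have "(\<lambda>k. real n * (dp_val F 1 - trunc_mean F (real k)) / trunc_mean F (real k))
      \<longlonglongrightarrow> real n * (dp_val F 1 - dp_val F 1) / dp_val F 1"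
    using \<mu> by (intro tendsto_intros mean_lim) auto
  then have loss_lim: "(\<lambda>k. real n * (dp_val F 1 - trunc_mean F (real k)) / trunc_mean F (real k)) \<longlonglongrightarrow> 0"
    by simp
  show ?thesis
  proof (rule ennreal_le_epsilon)
    fix \<epsilon> :: real assume "0 < \<epsilon>"
    have "eventually (\<lambda>k. 0 < trunc_mean F (real k) \<and>
        real n * (dp_val F 1 - trunc_mean F (real k)) / trunc_mean F (real k) < \<epsilon>) sequentially"
      using order_tendstoD(1)[OF mean_lim \<mu>] order_tendstoD(2)[OF loss_lim \<open>0 < \<epsilon>\<close>] by (rule eventually_conj)
    then obtain k where k: "0 < trunc_mean F (real k)"
      "real n * (dp_val F 1 - trunc_mean F (real k)) / trunc_mean F (real k) < \<epsilon>"
      by (auto simp: eventually_sequentially)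
    have "ennreal (\<Sum>s=1..n. dp_val F s) / OPT n F
        \<le> (SUP p\<in>feasible n. ennreal (\<Sum>i=1..n. fst p i))
          + ennreal (real n * (dp_val F 1 - trunc_mean F (real k)) / trunc_mean F (real k))"
      by (rule dp_ratio_le_feasible_plus_loss[OF n fam _ k(1)]) simp
    also have "\<dots> \<le> (SUP p\<in>feasible n. ennreal (\<Sum>i=1..n. fst p i)) + ennreal \<epsilon>"
      using k(2) by (intro add_left_mono ennreal_leI) simp
    finally show "ennreal (\<Sum>s=1..n. dp_val F s) / OPT n F
        \<le> (SUP p\<in>feasible n. ennreal (\<Sum>i=1..n. fst p i)) + ennreal \<epsilon>" .
  qed
qed

theorem mainTheorem4:
  fixes n :: nat
  assumes "1 \<le> n"
  shows "R_star n = (SUP p \<in> feasible n. ennreal (\<Sum>i=1..n. fst p i))"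
proof (rule antisym)
  have "R_star n \<le> ratio_D n dp_alg"
    unfolding R_star_def by (rule INF_lower) (simp add: dp_alg_admissible)
  also have "\<dots> = (SUP F \<in> dist_family. ennreal (\<Sum>s=1..n. dp_val F s) / OPT n F)"
    unfolding ratio_D_def by (intro SUP_cong refl) (simp add: ALG_dp_alg)
  also have "\<dots> \<le> (SUP p \<in> feasible n. ennreal (\<Sum>i=1..n. fst p i))"
    by (intro SUP_least dp_ratio_le_feasible[OF assms])
  finally show "R_star n \<le> (SUP p \<in> feasible n. ennreal (\<Sum>i=1..n. fst p i))" .
  show "(SUP p \<in> feasible n. ennreal (\<Sum>i=1..n. fst p i)) \<le> R_star n"
    unfolding R_star_def
  proof (intro SUP_least INF_greatest)
    fix p A assume "p \<in> feasible n" "A \<in> {A. admissible n A}"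
    then show "ennreal (\<Sum>i=1..n. fst p i) \<le> ratio_D n A"
      using feasible_le_ratio_D[of "fst p" "snd p" n A] by simp
  qed
qed

end
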